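(* (a) The basis $\{\widehat{\mathcal B}(q,t)_\alpha\}$ of $\mathsf{NSym}_{\mathbb C(q,t)}$ is multiplicative: $\widehat{\mathcal B}(q,t)_\alpha\widehat{\mathcal B}(q,t)_\beta=\widehat{\mathcal B}(q,t)_{\alpha\cdot\beta}$ for all compositions $\alpha,\beta$. (b) $\{\widehat{\mathcal B}(q,t)_k:k\ge0\}$ is a generating set of the algebra $\mathsf{NSym}_{\mathbb C(q,t)}$. (c) For every $k\ge0$, $$\triangle\widehat{\mathcal B}(q,t)_k=\sum_{A\subseteq[k]}(q+t)^{|c_2(A)|}t^{|c_1(A)|}\,\widehat{\mathcal B}(q,t)_{\alpha_A}\otimes\widehat{\mathcal B}(q,t)_{\beta_A}.$$ In particular, specializing $(q,t)=(1,0)$ and $(q,t)=(-1,1)$ recovers $\triangle H_k=\sum_{i+j=k}H_i\otimes H_j$ and $\triangle\Lambda_k=\sum_{i+j=k}\Lambda_i\otimes\Lambda_j$ in $\mathsf{NSym}$.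
   Context: $q,t$ commuting variables; $\mathsf{NSym}_{\mathbb C(q,t)}$ is the Hopf algebra of noncommutative symmetric functions over $\mathbb C(q,t)$, basis $H_\alpha$ (dual to monomial quasisymmetric functions), $H_k=H_{(k)}$. $[n]=\{1,\dots,n\}$. For a composition $\alpha$ of $n$, $\mathrm{set}(\alpha_1,\dots,\alpha_l)=\{\alpha_1,\dots,\alpha_1+\dots+\alpha_{l-1}\}\subseteq[n-1]$, $\ell(\alpha)=l$; $\beta\preceq\alpha$ means $\mathrm{set}(\alpha)\subseteq\mathrm{set}(\beta)$; $\alpha\cdot\beta$ is concatenation. Define $\widehat{\mathcal B}(q,t)_\alpha=\sum_{\beta\preceq\alpha}q^{n-\ell(\beta)}t^{\ell(\beta)-\ell(\alpha)}H_\beta$ (equivalently $\mathcal B(q,t)_{\alpha^c}$ with $\mathcal B(q,t)_{\mathrm{comp}(I)}=\sum_{J:\,I\cup J=[n-1]}q^{|I\setminus J|}t^{|I\cap J|}H_{\mathrm{comp}(J)}$ and $\alpha^c=\mathrm{comp}([n-1]\setminus\mathrm{set}(\alpha))$), $\widehat{\mathcal B}(q,t)_k=\widehat{\mathcal B}(q,t)_{(k)}$, and $\widehat{\mathcal B}(q,t)$ of the empty composition is $1$. For $A\subseteq[k]$: $\mathrm{conn}(A)$ is the set of maximal subsets of consecutive integers of $A$, listed $A_1,A_2,\dots$ by increasing minima; $A^c=[k]\setminus A$; $c_1(A)=\{\max B:B\in\mathrm{conn}(A)\}\setminus\{k\}$, $c_2(A)=\{\max B:B\in\mathrm{conn}(A^c)\}\setminus\{k\}$;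 $\alpha_A=(|A_1|,|A_2|,\dots)$ and $\beta_A=(|(A^c)_1|,|(A^c)_2|,\dots)$ (empty composition if the set is empty). $\Lambda_\alpha=\sum_{\beta\preceq\alpha}(-1)^{n-\ell(\beta)}H_\beta$ is the noncommutative elementary symmetric function, $\Lambda_k=\Lambda_{(k)}$. Specializations use $0^0=1$. *)

theory Defs
  imports Main "HOL-Computational_Algebra.Polynomial" "HOL-Computational_Algebra.Fraction_Field"
begin

text \<open>Noncommutative symmetric functions over a commutative ring 'a.
  An element is represented by its coefficient function in the basis H_alpha,
  alpha ranging over compositions (lists of positive naturals; [] is the empty composition).
  Elements of the tensor square are coefficient functions on pairs of compositions
  in the basis H_beta (x) H_gamma.\<close>

definition is_comp :: "nat list \<Rightarrow> bool" where
  "is_comp \<alpha> \<longleftrightarrow> (\<forall>x\<in>set \<alpha>. 0 < x)"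

definition nsym :: "(nat list \<Rightarrow> 'a::comm_ring_1) set" where
  "nsym = {f. finite {\<alpha>. f \<alpha> \<noteq> 0} \<and> (\<forall>\<alpha>. f \<alpha> \<noteq> 0 \<longrightarrow> is_comp \<alpha>)}"

definition HH :: "nat list \<Rightarrow> nat list \<Rightarrow> 'a::comm_ring_1" where
  "HH \<alpha> = (\<lambda>\<beta>. if \<beta> = \<alpha> then 1 else 0)"

definition Hk :: "nat \<Rightarrow> nat list \<Rightarrow> 'a::comm_ring_1" where
  "Hk k = HH (if k = 0 then [] else [k])"

definition nsym_one :: "nat list \<Rightarrow> 'a::comm_ring_1" where
  "nsym_one = HH []"

text \<open>Product: H_beta H_gamma = H_(beta.gamma).\<close>
definition nsym_mult :: "(nat list \<Rightarrow> 'a::comm_ring_1) \<Rightarrow> (nat list \<Rightarrow> 'a) \<Rightarrow> nat list \<Rightarrow> 'a" where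
  "nsym_mult f g = (\<lambda>\<alpha>. \<Sum>i\<le>length \<alpha>. f (take i \<alpha>) * g (drop i \<alpha>))"

definition nsym_add :: "(nat list \<Rightarrow> 'a::comm_ring_1) \<Rightarrow> (nat list \<Rightarrow> 'a) \<Rightarrow> nat list \<Rightarrow> 'a" where
  "nsym_add f g = (\<lambda>\<alpha>. f \<alpha> + g \<alpha>)"

definition nsym_smult :: "'a::comm_ring_1 \<Rightarrow> (nat list \<Rightarrow> 'a) \<Rightarrow> nat list \<Rightarrow> 'a" where
  "nsym_smult c f = (\<lambda>\<alpha>. c * f \<alpha>)"

inductive_set gen_alg :: "(nat list \<Rightarrow> 'a::comm_ring_1) set \<Rightarrow> (nat list \<Rightarrow> 'a) set"
  for G where
  one: "nsym_one \<in> gen_alg G"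
| gen: "g \<in> G \<Longrightarrow> g \<in> gen_alg G"
| add: "x \<in> gen_alg G \<Longrightarrow> y \<in> gen_alg G \<Longrightarrow> nsym_add x y \<in> gen_alg G"
| smult: "x \<in> gen_alg G \<Longrightarrow> nsym_smult c x \<in> gen_alg G"
| mult: "x \<in> gen_alg G \<Longrightarrow> y \<in> gen_alg G \<Longrightarrow> nsym_mult x y \<in> gen_alg G"

text \<open>Coproduct: the algebra morphism with Delta H_k = sum_{i+j=k} H_i (x) H_j, i.e.
  Delta H_alpha = sum over a+b=alpha (componentwise, a,b weak compositions) of
  H_(a without zeros) (x) H_(b without zeros).\<close>
definition cop_coeff :: "nat list \<Rightarrow> nat list \<Rightarrow> nat list \<Rightarrow> nat" where
  "cop_coeff \<alpha> \<beta> \<gamma> = card {(a, b). length a = length \<alpha> \<and> length b = length \<alpha> \<and>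
      (\<forall>i<length \<alpha>. a ! i + b ! i = \<alpha> ! i) \<and>
      filter (\<lambda>x. x \<noteq> 0) a = \<beta> \<and> filter (\<lambda>x. x \<noteq> 0) b = \<gamma>}"

definition coprod :: "(nat list \<Rightarrow> 'a::comm_ring_1) \<Rightarrow> nat list \<times> nat list \<Rightarrow> 'a" where
  "coprod f = (\<lambda>(\<beta>, \<gamma>). \<Sum>\<alpha>\<in>{\<alpha>. f \<alpha> \<noteq> 0}. f \<alpha> * of_nat (cop_coeff \<alpha> \<beta> \<gamma>))"

definition tensor :: "(nat list \<Rightarrow> 'a::comm_ring_1) \<Rightarrow> (nat list \<Rightarrow> 'a) \<Rightarrow> nat list \<times> nat list \<Rightarrow> 'a" where
  "tensor f g = (\<lambda>(\<beta>, \<gamma>). f \<beta> * g \<gamma>)"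

definition comp_set :: "nat list \<Rightarrow> nat set" where
  "comp_set \<alpha> = {sum_list (take i \<alpha>) | i. 0 < i \<and> i < length \<alpha>}"

text \<open>refines beta alpha  means  beta \<preceq> alpha (beta a composition of the same n).\<close>
definition refines :: "nat list \<Rightarrow> nat list \<Rightarrow> bool" where
  "refines \<beta> \<alpha> \<longleftrightarrow> is_comp \<beta> \<and> sum_list \<beta> = sum_list \<alpha> \<and> comp_set \<alpha> \<subseteq> comp_set \<beta>"

definition Bhat :: "'a::comm_ring_1 \<Rightarrow> 'a \<Rightarrow> nat list \<Rightarrow> nat list \<Rightarrow> 'a" where
  "Bhat q t \<alpha> = (\<lambda>\<beta>. if refines \<beta> \<alpha>
      then q ^ (sum_list \<alpha> - length \<beta>) * t ^ (length \<beta> - length \<alpha>) else 0)"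

definition Bhatk :: "'a::comm_ring_1 \<Rightarrow> 'a \<Rightarrow> nat \<Rightarrow> nat list \<Rightarrow> 'a" where
  "Bhatk q t k = Bhat q t (if k = 0 then [] else [k])"

definition Lam :: "nat list \<Rightarrow> nat list \<Rightarrow> 'a::comm_ring_1" where
  "Lam \<alpha> = (\<lambda>\<beta>. if refines \<beta> \<alpha> then (-1) ^ (sum_list \<alpha> - length \<beta>) else 0)"

definition Lamk :: "nat \<Rightarrow> nat list \<Rightarrow> 'a::comm_ring_1" where
  "Lamk k = Lam (if k = 0 then [] else [k])"

definition consecutive :: "nat set \<Rightarrow> bool" where
  "consecutive B \<longleftrightarrow> (\<forall>x y z. x \<in> B \<longrightarrow> z \<in> B \<longrightarrow> x \<le> y \<longrightarrow> y \<le> z \<longrightarrow> y \<in> B)"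

definition conn :: "nat set \<Rightarrow> nat set set" where
  "conn A = {B. B \<noteq> {} \<and> B \<subseteq> A \<and> consecutive B \<and>
               (\<forall>C. B \<subseteq> C \<longrightarrow> C \<subseteq> A \<longrightarrow> consecutive C \<longrightarrow> C = B)}"

definition conn_comp :: "nat set \<Rightarrow> nat list" where
  "conn_comp A = map (\<lambda>m. card (THE B. B \<in> conn A \<and> Min B = m))
                     (sorted_list_of_set (Min ` conn A))"

definition c1 :: "nat \<Rightarrow> nat set \<Rightarrow> nat set" where
  "c1 k A = (Max ` conn A) - {k}"

definition c2 :: "nat \<Rightarrow> nat set \<Rightarrow> nat set" where
  "c2 k A = (Max ` conn ({1..k} - A)) - {k}"

definition alphaA :: "nat set \<Rightarrow> nat list" where
  "alphaA A = conn_comp A"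

definition betaA :: "nat \<Rightarrow> nat set \<Rightarrow> nat list" where
  "betaA k A = conn_comp ({1..k} - A)"

text \<open>The field C(q,t), realised as the fraction field of C[q][t].\<close>
type_synonym Cqt = "complex poly poly fract"

definition qq :: Cqt where "qq = Fract [:[:0, 1:]:] 1"
definition tt :: Cqt where "tt = Fract [:0, 1:] 1"

end

theory Submission
  imports Defs
begin

text \<open>
  (a) A refinement of \<open>\<alpha> \<cdot> \<beta>\<close> splits in exactly one way into a refinement of \<open>\<alpha>\<close>
  followed by one of \<open>\<beta>\<close>, because partial sums of a composition are strictly increasing;
  so the product has a single term, and the exponents of \<open>q\<close> and \<open>t\<close> add up.

  (b) By (a), \<open>Bhat q t \<alpha>\<close> is a product of the \<open>Bhatk q t k\<close>, and in the \<open>H\<close>-basis it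
  is triangular with respect to refinement, with diagonal entries \<open>q ^ (n - length \<alpha>)\<close>.

  (c) Evaluate both sides at \<open>H\<^sub>\<beta> \<otimes> H\<^sub>\<gamma>\<close> and sort the terms by whether the last
  letter \<open>k\<close> goes to the left or the right factor: on the left, whether the last part of the
  composition of \<open>k\<close> contributes a nonzero part to \<open>\<beta>\<close>; on the right, whether
  \<open>k \<in> A\<close>. Both pairs of functions of \<open>(k, \<beta>, \<gamma>)\<close> agree for \<open>k = 1\<close> and satisfy the
  same recursion in \<open>k\<close>, which decrements or removes the last part of \<open>\<beta>\<close> or \<open>\<gamma>\<close>.
  At \<open>(q, t) = (1, 0)\<close> and \<open>(-1, 1)\<close> the weights become the indicators of \<open>A\<close> being a
  final, resp. initial, segment of \<open>[k]\<close>.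
\<close>

section \<open>Compositions\<close>

lemma is_comp_Nil [simp]: "is_comp []"
  by (simp add: is_comp_def)

lemma is_comp_Cons [simp]: "is_comp (x # a) \<longleftrightarrow> 0 < x \<and> is_comp a"
  by (auto simp: is_comp_def)

lemma is_comp_append [simp]: "is_comp (a @ b) \<longleftrightarrow> is_comp a \<and> is_comp b"
  by (auto simp: is_comp_def)

lemma is_comp_take: "is_comp a \<Longrightarrow> is_comp (take i a)"
  by (auto simp: is_comp_def dest: in_set_takeD)

lemma is_comp_drop: "is_comp a \<Longrightarrow> is_comp (drop i a)"
  by (auto simp: is_comp_def dest: in_set_dropD)

lemma is_comp_last_pos: "is_comp a \<Longrightarrow> a \<noteq> [] \<Longrightarrow> 0 < last a"
  by (auto simp: is_comp_def)

lemma is_comp_sum_list_pos: "is_comp a \<Longrightarrow> a \<noteq> [] \<Longrightarrow> 0 < sum_list a"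
  by (cases a) auto

lemma is_comp_length_le_sum_list: "is_comp a \<Longrightarrow> length a \<le> sum_list a"
  by (induction a) auto

lemma is_comp_sum_take_less:
  assumes "is_comp g" "i < j" "j \<le> length g"
  shows "sum_list (take i g) < sum_list (take j g)"
proof -
  have "take j g = take i g @ take (j - i) (drop i g)"
    using take_add[of i "j - i" g] assms(2) by simp
  moreover have "0 < sum_list (take (j - i) (drop i g))"
    using assms by (intro is_comp_sum_list_pos is_comp_take is_comp_drop) auto
  ultimately show ?thesis by simp
qed

lemma is_comp_sum_take_inj:
  assumes "is_comp g" "i \<le> length g" "j \<le> length g" "sum_list (take i g) = sum_list (take j g)"
  shows "i = j"
  using is_comp_sum_take_less[OF assms(1), of i j] is_comp_sum_take_less[OF assms(1), of j i] assms
  by (cases i j rule: linorder_cases) auto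

abbreviation single_comp :: "nat \<Rightarrow> nat list" where
  "single_comp k \<equiv> if k = 0 then [] else [k]"

definition comps :: "nat \<Rightarrow> nat list set" where
  "comps n = {a. is_comp a \<and> sum_list a = n}"

lemma finite_comps: "finite (comps n)"
proof (rule finite_subset)
  show "comps n \<subseteq> {xs. set xs \<subseteq> {..n} \<and> length xs \<le> n}"
    using member_le_sum_list is_comp_length_le_sum_list by (fastforce simp: comps_def)
qed (rule finite_lists_length_le, simp)

lemma comps_1: "comps 1 = {[1]}"
proof -
  have "a = [1]" if "is_comp a" "sum_list a = 1" for a
    using that is_comp_sum_list_pos[of "tl a"] by (cases a) auto
  then show ?thesis by (auto simp: comps_def)
qed

lemma comps_nonempty: "a \<in> comps n \<Longrightarrow> 0 < n \<Longrightarrow> a \<noteq> []"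
  by (auto simp: comps_def)

lemma comps_last_pos: "a \<in> comps n \<Longrightarrow> 0 < n \<Longrightarrow> 0 < last a"
  using comps_nonempty is_comp_last_pos by (auto simp: comps_def)

lemma comps_snoc_iff: "a @ [x] \<in> comps n \<longleftrightarrow> 0 < x \<and> x \<le> n \<and> a \<in> comps (n - x)"
  by (auto simp: comps_def)

definition dec_last :: "nat list \<Rightarrow> nat list" where
  "dec_last g = butlast g @ [last g - 1]"

definition inc_last :: "nat list \<Rightarrow> nat list" where
  "inc_last a = butlast a @ [Suc (last a)]"

lemma dec_last_snoc [simp]: "dec_last (a @ [x]) = a @ [x - 1]"
  by (simp add: dec_last_def)

lemma inc_last_snoc [simp]: "inc_last (a @ [x]) = a @ [Suc x]"
  by (simp add: inc_last_def)

lemma comps_Suc: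
  assumes "0 < n"
  shows "comps (Suc n) = inc_last ` comps n \<union> (\<lambda>a. a @ [1]) ` comps n"
proof (intro set_eqI iffI)
  fix b assume b: "b \<in> comps (Suc n)"
  then obtain a x where ax: "b = a @ [x]"
    using comps_nonempty by (cases b rule: rev_cases) auto
  show "b \<in> inc_last ` comps n \<union> (\<lambda>a. a @ [1]) ` comps n"
  proof (cases "x = 1")
    case True
    then show ?thesis using b ax by (auto simp: comps_snoc_iff)
  next
    case False
    then have "b = inc_last (a @ [x - 1])" "a @ [x - 1] \<in> comps n"
      using b ax by (auto simp: comps_snoc_iff)
    then show ?thesis by blast
  qed
next
  fix b assume "b \<in> inc_last ` comps n \<union> (\<lambda>a. a @ [1]) ` comps n"
  then consider a where "a \<in> comps n" "b = inc_last a" | a where "a \<in> comps n" "b = a @ [1]"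
    by blast
  then show "b \<in> comps (Suc n)"
  proof cases
    case (1 a)
    then show ?thesis
      using comps_nonempty[OF 1(1) assms] comps_last_pos[OF 1(1) assms]
      by (cases a rule: rev_cases) (auto simp: comps_snoc_iff)
  qed (auto simp: comps_snoc_iff)
qed

lemma sum_comps_Suc:
  assumes "0 < n"
  shows "(\<Sum>a\<in>comps (Suc n). F a) = (\<Sum>a\<in>comps n. F (inc_last a)) + (\<Sum>a\<in>comps n. F (a @ [1]))"
proof -
  have "inj_on inc_last (comps n)"
  proof (rule inj_onI)
    fix a b assume "a \<in> comps n" "b \<in> comps n" "inc_last a = inc_last b"
    then show "a = b" using comps_nonempty[OF _ assms]
      by (cases a rule: rev_cases; cases b rule: rev_cases) auto
  qed
  moreover have "inc_last ` comps n \<inter> (\<lambda>a. a @ [1]) ` comps n = {}"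
    by (force simp: inc_last_def dest: comps_last_pos[OF _ assms])
  moreover have "inj_on (\<lambda>a. a @ [1]) (comps n)" by (rule inj_onI) simp
  ultimately show ?thesis
    unfolding comps_Suc[OF assms] using finite_comps
    by (simp add: sum.union_disjoint sum.reindex)
qed

section \<open>Refinement\<close>

lemma comp_set_bounds:
  assumes "is_comp a" "x \<in> comp_set a"
  shows "0 < x \<and> x < sum_list a"
proof -
  obtain i where "x = sum_list (take i a)" "0 < i" "i < length a"
    using assms(2) by (auto simp: comp_set_def)
  then show ?thesis
    using is_comp_sum_take_less[OF assms(1), of 0 i] is_comp_sum_take_less[OF assms(1), of i "length a"]
    by simp
qed

lemma comp_set_append:
  "comp_set (a @ b) = comp_set a \<union> (if a \<noteq> [] \<and> b \<noteq> [] then {sum_list a} else {})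
     \<union> (+) (sum_list a) ` comp_set b"
proof (intro set_eqI iffI)
  fix x assume "x \<in> comp_set (a @ b)"
  then obtain i where i: "x = sum_list (take i (a @ b))" "0 < i" "i < length a + length b"
    by (auto simp: comp_set_def)
  consider "i < length a" | "i = length a" | "length a < i" by linarith
  then show "x \<in> comp_set a \<union> (if a \<noteq> [] \<and> b \<noteq> [] then {sum_list a} else {})
     \<union> (+) (sum_list a) ` comp_set b"
  proof cases
    case 3
    then have "sum_list (take (i - length a) b) \<in> comp_set b"
      using i unfolding comp_set_def by (intro CollectI exI[of _ "i - length a"]) auto
    then show ?thesis using i 3 by auto
  qed (use i in \<open>auto simp: comp_set_def\<close>)
next
  fix x assume "x \<in> comp_set a \<union> (if a \<noteq> [] \<and> b \<noteq> [] then {sum_list a} else {})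
     \<union> (+) (sum_list a) ` comp_set b"
  then consider i where "x = sum_list (take i a)" "0 < i" "i < length a"
    | "a \<noteq> []" "b \<noteq> []" "x = sum_list a"
    | i where "x = sum_list a + sum_list (take i b)" "0 < i" "i < length b"
    by (auto simp: comp_set_def split: if_splits)
  then show "x \<in> comp_set (a @ b)"
  proof cases
    case (1 i)
    then show ?thesis unfolding comp_set_def by (intro CollectI exI[of _ i]) auto
  next
    case 2
    then show ?thesis unfolding comp_set_def by (intro CollectI exI[of _ "length a"]) auto
  next
    case (3 i)
    then show ?thesis unfolding comp_set_def by (intro CollectI exI[of _ "length a + i"]) auto
  qed
qed

lemma refinesD:
  assumes "refines g a"
  shows "is_comp g" "sum_list g = sum_list a" "comp_set a \<subseteq> comp_set g"
  using assms by (simp_all add: refines_def)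

lemma refines_refl: "is_comp a \<Longrightarrow> refines a a"
  by (simp add: refines_def)

lemma refines_singleton: "refines g [m] \<longleftrightarrow> is_comp g \<and> sum_list g = m"
  by (simp add: refines_def comp_set_def)

lemma refines_Nil: "refines g [] \<longleftrightarrow> g = []"
  by (cases g) (auto simp: refines_def comp_set_def)

lemma refines_length_le_sum_list: "refines g a \<Longrightarrow> length g \<le> sum_list a"
  using is_comp_length_le_sum_list[of g] by (simp add: refines_def)

lemma refines_append_join:
  assumes "is_comp a" "is_comp b" "refines u a" "refines v b"
  shows "refines (u @ v) (a @ b)"
proof -
  have u: "is_comp u" "sum_list u = sum_list a" "comp_set a \<subseteq> comp_set u"
    and v: "is_comp v" "sum_list v = sum_list b" "comp_set b \<subseteq> comp_set v"
    using refinesD assms(3,4) by blast+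
  have "u \<noteq> []" if "a \<noteq> []"
    using is_comp_sum_list_pos[OF assms(1) that] u(2) by (metis less_irrefl sum_list.Nil)
  moreover have "v \<noteq> []" if "b \<noteq> []"
    using is_comp_sum_list_pos[OF assms(2) that] v(2) by (metis less_irrefl sum_list.Nil)
  ultimately have "comp_set (a @ b) \<subseteq> comp_set (u @ v)"
    using u v unfolding comp_set_append by auto
  then show ?thesis using u v by (simp add: refines_def)
qed

lemma refines_append_split:
  assumes a: "is_comp a" and b: "is_comp b" and g: "refines g (a @ b)"
  obtains i where "i \<le> length g" "refines (take i g) a" "refines (drop i g) b"
proof (cases "a = [] \<or> b = []")
  case True
  then show ?thesis using g that[of 0] that[of "length g"] by (auto simp: refines_Nil)
next
  case False
  have cg: "is_comp g" and sg: "sum_list g = sum_list a + sum_list b"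
    and sub: "comp_set (a @ b) \<subseteq> comp_set g"
    using refinesD[OF g] by auto
  have "sum_list a \<in> comp_set g" using sub False by (auto simp: comp_set_append)
  then obtain i where i: "sum_list (take i g) = sum_list a" "0 < i" "i < length g"
    by (auto simp: comp_set_def)
  let ?u = "take i g" and ?v = "drop i g"
  have cuv: "is_comp ?u" "is_comp ?v" using cg by (simp_all add: is_comp_take is_comp_drop)
  have g_split: "comp_set g = comp_set ?u \<union> {sum_list a} \<union> (+) (sum_list a) ` comp_set ?v"
  proof -
    have "?u \<noteq> []" "?v \<noteq> []" using i by auto
    then show ?thesis using comp_set_append[of ?u ?v] i(1) by simp
  qed
  have "comp_set a \<subseteq> comp_set ?u"
  proof
    fix x assume x: "x \<in> comp_set a"
    then have "x \<in> comp_set g" "x < sum_list a"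
      using sub comp_set_bounds[OF a x] by (auto simp: comp_set_append)
    then show "x \<in> comp_set ?u" using g_split by auto
  qed
  moreover have "comp_set b \<subseteq> comp_set ?v"
  proof
    fix y assume y: "y \<in> comp_set b"
    then have "sum_list a + y \<in> comp_set g" "0 < y"
      using sub comp_set_bounds[OF b y] by (auto simp: comp_set_append)
    moreover have "\<forall>z\<in>comp_set ?u. z < sum_list a" using comp_set_bounds[OF cuv(1)] i(1) by auto
    ultimately show "y \<in> comp_set ?v" using g_split by auto
  qed
  moreover have "sum_list ?v = sum_list b"
    using sg i(1) sum_list_append[of ?u ?v] by simp
  ultimately show ?thesis using that[of i] i cuv by (simp add: refines_def)
qed

lemma refines_append:
  assumes "is_comp a" "is_comp b"
  shows "refines g (a @ b) \<longleftrightarrow> (\<exists>i\<le>length g. refines (take i g) a \<and> refines (drop i g) b)"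
  using refines_append_split[OF assms] refines_append_join[OF assms, of "take _ g" "drop _ g"]
  by (metis append_take_drop_id)

lemma refines_length_le: "is_comp a \<Longrightarrow> refines g a \<Longrightarrow> length a \<le> length g"
proof (induction a arbitrary: g)
  case (Cons x a)
  then obtain i where i: "i \<le> length g" "refines (take i g) [x]" "refines (drop i g) a"
    using refines_append[of "[x]" a g] by auto
  then have "0 < sum_list (take i g)" using Cons.prems by (simp add: refines_singleton)
  then have "take i g \<noteq> []" by (metis less_irrefl sum_list.Nil)
  then show ?case using Cons.IH[OF _ i(3)] Cons.prems i(1) by auto
qed simp

lemma refines_length_eq: "is_comp a \<Longrightarrow> refines g a \<Longrightarrow> length g = length a \<Longrightarrow> g = a"
proof (induction a arbitrary: g)
  case (Cons x a)
  then obtain i where i: "i \<le> length g" "refines (take i g) [x]" "refines (drop i g) a"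
    using refines_append[of "[x]" a g] by auto
  then have "0 < sum_list (take i g)" using Cons.prems by (simp add: refines_singleton)
  then have "take i g \<noteq> []" by (metis less_irrefl sum_list.Nil)
  moreover have "length a \<le> length g - i" using refines_length_le[OF _ i(3)] Cons.prems by simp
  ultimately have "i = 1" using Cons.prems(3) i(1) by auto
  then obtain y g' where "g = y # g'" "y = x" "refines g' a"
    using i Cons.prems(3) by (cases g) (auto simp: refines_singleton)
  then show ?case using Cons.IH[of g'] Cons.prems by simp
qed (simp add: refines_Nil)

lemma refines_snoc:
  assumes "is_comp a" "0 < c"
  shows "refines g (a @ [c]) \<longleftrightarrow> (\<exists>u v. g = u @ v \<and> refines u a \<and> v \<in> comps c)"
proof -
  have "refines g (a @ [c]) \<longleftrightarrow> (\<exists>i\<le>length g. refines (take i g) a \<and> drop i g \<in> comps c)"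
    using assms by (simp add: refines_append refines_singleton comps_def)
  also have "\<dots> \<longleftrightarrow> (\<exists>u v. g = u @ v \<and> refines u a \<and> v \<in> comps c)"
  proof
    assume "\<exists>i\<le>length g. refines (take i g) a \<and> drop i g \<in> comps c"
    then show "\<exists>u v. g = u @ v \<and> refines u a \<and> v \<in> comps c" by (metis append_take_drop_id)
  next
    assume "\<exists>u v. g = u @ v \<and> refines u a \<and> v \<in> comps c"
    then obtain u v where "g = u @ v" "refines u a" "v \<in> comps c" by blast
    then show "\<exists>i\<le>length g. refines (take i g) a \<and> drop i g \<in> comps c"
      by (intro exI[of _ "length u"]) simp
  qed
  finally show ?thesis .
qed

lemma refines_snoc_snoc:
  assumes "is_comp a" "0 < c" "0 < y"
  shows "refines (h @ [y]) (a @ [c]) \<longleftrightarrow> (\<exists>u w. h = u @ w \<and> refines u a \<and> w @ [y] \<in> comps c)"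
proof -
  have "h @ [y] = u @ v \<and> v \<in> comps c \<longleftrightarrow> (\<exists>w. v = w @ [y] \<and> h = u @ w \<and> w @ [y] \<in> comps c)" for u v
    using comps_nonempty[of v c] assms(2) by (cases v rule: rev_cases) auto
  then show ?thesis unfolding refines_snoc[OF assms(1,2)] by blast
qed

lemma refines_snoc_Suc_snoc_Suc:
  assumes "is_comp a" "0 < m"
  shows "refines (h @ [Suc y]) (a @ [Suc m]) \<longleftrightarrow>
    (y = 0 \<and> refines h (a @ [m])) \<or> (0 < y \<and> refines (h @ [y]) (a @ [m]))"
proof -
  have "refines (h @ [Suc y]) (a @ [Suc m]) \<longleftrightarrow>
      (\<exists>u w. h = u @ w \<and> refines u a \<and> w @ [Suc y] \<in> comps (Suc m))"
    using assms by (intro refines_snoc_snoc) auto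
  moreover have "w @ [Suc y] \<in> comps (Suc m) \<longleftrightarrow> (y = 0 \<and> w \<in> comps m) \<or> (0 < y \<and> w @ [y] \<in> comps m)"
    for w by (auto simp: comps_snoc_iff)
  ultimately show ?thesis
    using refines_snoc[OF assms] refines_snoc_snoc[OF assms(1,2), of y h] by (cases "y = 0") auto
qed

section \<open>Multiplicativity and generation\<close>

lemma Bhat_Nil: "Bhat q t [] = nsym_one"
  by (auto simp: Bhat_def nsym_one_def HH_def refines_Nil)

lemma Bhat_Nil_apply: "Bhat q t [] d = of_bool (d = [])"
  by (simp add: Bhat_Nil nsym_one_def HH_def)

lemma Bhat_singleton:
  "Bhat q t [n] g =
     (if is_comp g \<and> sum_list g = n then q ^ (n - length g) * t ^ (length g - 1) else 0)"
  by (simp add: Bhat_def refines_singleton)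

lemma Bhat_singleton_1: "Bhat q t [1] g = of_bool (g = [1])"
  using comps_1 by (auto simp: Bhat_singleton comps_def)

lemma Bhat_singleton_inc_last:
  assumes "a \<in> comps n" "0 < n"
  shows "Bhat q t [Suc n] (inc_last a) = q * Bhat q t [n] a"
proof -
  obtain b x where a: "a = b @ [x]" "0 < x"
    using comps_nonempty[OF assms] comps_last_pos[OF assms] by (cases a rule: rev_cases) auto
  moreover have "length a \<le> n"
    using assms(1) is_comp_length_le_sum_list[of a] by (simp add: comps_def)
  then have "n - length b = Suc (n - length a)" using a by simp
  ultimately show ?thesis using assms(1) by (simp add: Bhat_singleton comps_def)
qed

lemma Bhat_singleton_snoc_1:
  assumes "a \<in> comps n" "0 < n"
  shows "Bhat q t [Suc n] (a @ [1]) = t * Bhat q t [n] a"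
proof -
  have "t ^ length a = t * t ^ (length a - 1)"
    using comps_nonempty[OF assms] by (cases a) auto
  then show ?thesis using assms(1) by (simp add: Bhat_singleton comps_def)
qed

lemma Bhat_snoc_1:
  assumes "is_comp a"
  shows "Bhat q t (a @ [1]) g = (if g \<noteq> [] \<and> last g = 1 then Bhat q t a (butlast g) else 0)"
proof (cases g rule: rev_cases)
  case Nil
  then show ?thesis by (simp add: Bhat_def refines_def)
next
  case (snoc h x)
  have "refines (h @ [x]) (a @ [1]) \<longleftrightarrow> x = 1 \<and> refines h a"
    using comps_snoc_iff[of _ x 1] comps_1 unfolding refines_snoc[OF assms zero_less_one]
    by (auto simp: comps_def)
  then show ?thesis using snoc by (simp add: Bhat_def)
qed

lemma Bhat_snoc_Suc:
  assumes "is_comp a" "0 < m"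
  shows "Bhat q t (a @ [Suc m]) g =
    (if g \<noteq> [] \<and> 2 \<le> last g then q * Bhat q t (a @ [m]) (dec_last g) else 0) +
    (if g \<noteq> [] \<and> last g = 1 then t * Bhat q t (a @ [m]) (butlast g) else 0)"
proof (cases g rule: rev_cases)
  case Nil
  then show ?thesis by (simp add: Bhat_def refines_def)
next
  case (snoc h x)
  show ?thesis
  proof (cases x)
    case 0
    then have "\<not> refines g (a @ [Suc m])" using snoc by (auto dest: refinesD(1))
    then show ?thesis using snoc 0 by (simp add: Bhat_def)
  next
    case (Suc y)
    note iff = refines_snoc_Suc_snoc_Suc[OF assms, of h y]
    show ?thesis
    proof (cases "y = 0")
      case True
      have "length h - length a = Suc (length h - Suc (length a))" if "refines h (a @ [m])"
        using refines_length_le[OF _ that] assms by simp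
      then show ?thesis using snoc Suc True iff by (auto simp: Bhat_def)
    next
      case False
      have "sum_list a + m - length h = Suc (sum_list a + m - Suc (length h))"
        if "refines (h @ [y]) (a @ [m])"
        using refines_length_le_sum_list[OF that] by simp
      then show ?thesis using snoc Suc False iff by (auto simp: Bhat_def)
    qed
  qed
qed

theorem Bhat_mult:
  assumes a: "is_comp a" and b: "is_comp b"
  shows "nsym_mult (Bhat q t a) (Bhat q t b) = Bhat q t (a @ b)"
proof
  fix g
  let ?P = "\<lambda>j. Bhat q t a (take j g) * Bhat q t b (drop j g)"
  show "nsym_mult (Bhat q t a) (Bhat q t b) g = Bhat q t (a @ b) g"
  proof (cases "refines g (a @ b)")
    case True
    then obtain i where i: "i \<le> length g" "refines (take i g) a" "refines (drop i g) b"
      using refines_append_split[OF a b] by blast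
    have "?P j = 0" if "j \<le> length g" "j \<noteq> i" for j
    proof (rule ccontr)
      assume "?P j \<noteq> 0"
      then have "sum_list (take j g) = sum_list (take i g)"
        using refinesD(2)[OF i(2)] by (auto simp: Bhat_def dest: refinesD(2) split: if_splits)
      then show False using is_comp_sum_take_inj[OF refinesD(1)[OF True]] that i(1) by blast
    qed
    then have "nsym_mult (Bhat q t a) (Bhat q t b) g = ?P i"
      unfolding nsym_mult_def using i(1) by (subst sum.remove[of _ i]) auto
    also have "\<dots> = q ^ ((sum_list a - i) + (sum_list b - (length g - i))) *
        t ^ ((i - length a) + (length g - i - length b))"
      using i by (simp add: Bhat_def power_add min_def algebra_simps)
    also have "\<dots> = Bhat q t (a @ b) g"
      using True i refines_length_le[OF a i(2)] refines_length_le[OF b i(3)]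
        refines_length_le_sum_list[OF i(2)] refines_length_le_sum_list[OF i(3)]
      by (simp add: Bhat_def)
    finally show ?thesis .
  next
    case False
    then have "?P j = 0" if "j \<le> length g" for j
      using that refines_append[OF a b] by (auto simp: Bhat_def)
    then show ?thesis using False by (simp add: nsym_mult_def Bhat_def)
  qed
qed

lemma gen_alg_scale: "f \<in> gen_alg G \<Longrightarrow> (\<lambda>b. c * f b) \<in> gen_alg G"
  using gen_alg.smult[of f G c] by (simp add: nsym_smult_def)

lemma gen_alg_zero: "(\<lambda>b. 0) \<in> gen_alg G"
  using gen_alg_scale[OF gen_alg.one, where c = 0] by simp

lemma gen_alg_sum:
  assumes "finite S" "\<And>x. x \<in> S \<Longrightarrow> f x \<in> gen_alg G"
  shows "(\<lambda>b. \<Sum>x\<in>S. f x b) \<in> gen_alg G"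
  using assms
proof (induction S rule: finite_induct)
  case (insert x S)
  then have "nsym_add (f x) (\<lambda>b. \<Sum>x\<in>S. f x b) \<in> gen_alg G" by (intro gen_alg.add) auto
  with insert show ?case by (simp add: nsym_add_def)
qed (simp add: gen_alg_zero)

lemma Bhat_in_gen_alg: "is_comp a \<Longrightarrow> Bhat q t a \<in> gen_alg (range (Bhatk q t))"
proof (induction a)
  case Nil
  then show ?case by (simp add: Bhat_Nil gen_alg.one)
next
  case (Cons x a)
  have "Bhat q t [x] = Bhatk q t x" using Cons.prems by (simp add: Bhatk_def)
  then have "Bhat q t [x] \<in> gen_alg (range (Bhatk q t))" by (auto intro: gen_alg.gen)
  then have "nsym_mult (Bhat q t [x]) (Bhat q t a) \<in> gen_alg (range (Bhatk q t))"
    using Cons by (intro gen_alg.mult) auto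
  then show ?case using Bhat_mult[of "[x]" a q t] Cons.prems by simp
qed

lemma HH_expansion:
  assumes "finite S" "{g. f g \<noteq> 0} \<subseteq> S"
  shows "(\<lambda>b. \<Sum>g\<in>S. f g * HH g b) = f"
proof
  fix b
  have "(\<Sum>g\<in>S. f g * HH g b) = (\<Sum>g\<in>S. if b = g then f g else 0)"
    by (intro sum.cong) (auto simp: HH_def)
  then show "(\<Sum>g\<in>S. f g * HH g b) = f b" using assms by (auto simp: sum.delta)
qed

lemma HH_in_gen_alg:
  fixes q t :: "'a::field"
  assumes "q \<noteq> 0" "is_comp a"
  shows "HH a \<in> gen_alg (range (Bhatk q t))"
  using assms(2)
proof (induction "sum_list a - length a" arbitrary: a rule: less_induct)
  case less
  let ?G = "gen_alg (range (Bhatk q t))"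
  define R where "R = {g. refines g a} - {a}"
  define c where "c = q ^ (sum_list a - length a)"
  define S where "S b = (\<Sum>g\<in>R. Bhat q t a g * HH g b)" for b
  have fin_refines: "finite {g. refines g a}"
    by (rule finite_subset[OF _ finite_comps[of "sum_list a"]]) (auto simp: comps_def refines_def)
  then have fin: "finite R" by (simp add: R_def)
  have "HH g \<in> ?G" if "g \<in> R" for g
  proof -
    have g: "refines g a" "g \<noteq> a" using that by (auto simp: R_def)
    then have "length a < length g"
      using refines_length_le[OF less.prems g(1)] refines_length_eq[OF less.prems g(1)] by force
    then show ?thesis
      using less.hyps[of g] refinesD[OF g(1)] refines_length_le_sum_list[OF g(1)] by simp
  qed
  then have "S \<in> ?G" unfolding S_def using fin by (intro gen_alg_sum gen_alg_scale) auto
  then have "(\<lambda>b. inverse c * (Bhat q t a b + (-1) * S b)) \<in> ?G"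
    using Bhat_in_gen_alg[OF less.prems]
    by (intro gen_alg_scale gen_alg.add[unfolded nsym_add_def]) auto
  moreover have "Bhat q t a b = c * HH a b + S b" for b
  proof -
    have "(\<lambda>b. \<Sum>g\<in>insert a R. Bhat q t a g * HH g b) = Bhat q t a"
      by (rule HH_expansion) (auto simp: R_def Bhat_def fin_refines)
    then have "Bhat q t a b = (\<Sum>g\<in>insert a R. Bhat q t a g * HH g b)" by metis
    also have "\<dots> = Bhat q t a a * HH a b + S b"
      using fin by (simp add: S_def sum.insert_remove R_def)
    finally show ?thesis using less.prems by (simp add: c_def Bhat_def refines_refl)
  qed
  ultimately show ?case using assms(1) by (simp add: c_def field_simps)
qed

lemma nsym_subset_gen_alg:
  fixes q t :: "'a::field"
  assumes "q \<noteq> 0"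
  shows "nsym \<subseteq> gen_alg (range (Bhatk q t))"
proof
  fix f :: "nat list \<Rightarrow> 'a" assume "f \<in> nsym"
  then have fin: "finite {a. f a \<noteq> 0}" and "\<And>a. f a \<noteq> 0 \<Longrightarrow> is_comp a"
    by (auto simp: nsym_def)
  then have "(\<lambda>b. \<Sum>a\<in>{a. f a \<noteq> 0}. f a * HH a b) \<in> gen_alg (range (Bhatk q t))"
    using HH_in_gen_alg[OF assms] by (intro gen_alg_sum gen_alg_scale) auto
  then show "f \<in> gen_alg (range (Bhatk q t))" using HH_expansion[OF fin, where f = f] by simp
qed

section \<open>Coproduct coefficients\<close>

abbreviation nonzero_parts :: "nat list \<Rightarrow> nat list" where
  "nonzero_parts a \<equiv> filter (\<lambda>x. x \<noteq> 0) a"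

definition weak_splits :: "nat list \<Rightarrow> (nat list \<times> nat list) set" where
  "weak_splits \<alpha> = {(a, b). length a = length \<alpha> \<and> length b = length \<alpha> \<and>
      (\<forall>i<length \<alpha>. a ! i + b ! i = \<alpha> ! i)}"

lemma weak_splits_Nil: "weak_splits [] = {([], [])}"
  by (auto simp: weak_splits_def)

lemma weak_splits_snoc:
  "weak_splits (\<alpha> @ [m]) = (\<lambda>(k, a, b). (a @ [k], b @ [m - k])) ` ({..m} \<times> weak_splits \<alpha>)"
proof (intro set_eqI iffI)
  fix p assume p: "p \<in> weak_splits (\<alpha> @ [m])"
  obtain a b where p_ab: "p = (a, b)" by fastforce
  have len: "length a = Suc (length \<alpha>)" "length b = Suc (length \<alpha>)"
    and sums: "\<forall>i<Suc (length \<alpha>). a ! i + b ! i = (\<alpha> @ [m]) ! i"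
    using p p_ab by (auto simp: weak_splits_def)
  have ne: "a \<noteq> []" "b \<noteq> []" using len by auto
  have "a ! length \<alpha> + b ! length \<alpha> = m" using sums by (simp add: nth_append)
  then have "last a + last b = m" using len ne by (simp add: last_conv_nth)
  moreover have "(butlast a, butlast b) \<in> weak_splits \<alpha>"
    using len sums by (auto simp: weak_splits_def nth_butlast nth_append)
  moreover have "a = butlast a @ [last a]" "b = butlast b @ [last b]" using ne by simp_all
  ultimately show "p \<in> (\<lambda>(k, a, b). (a @ [k], b @ [m - k])) ` ({..m} \<times> weak_splits \<alpha>)"
    using p_ab by (intro image_eqI[of _ _ "(last a, butlast a, butlast b)"]) auto
next
  fix p assume "p \<in> (\<lambda>(k, a, b). (a @ [k], b @ [m - k])) ` ({..m} \<times> weak_splits \<alpha>)"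
  then show "p \<in> weak_splits (\<alpha> @ [m])"
    by (auto simp: weak_splits_def nth_append less_Suc_eq)
qed

lemma finite_weak_splits: "finite (weak_splits \<alpha>)"
  by (induction \<alpha> rule: rev_induct) (simp_all add: weak_splits_Nil weak_splits_snoc)

definition strip_last :: "nat \<Rightarrow> nat list \<Rightarrow> nat list option" where
  "strip_last k g =
     (if k = 0 then Some g else if g \<noteq> [] \<and> last g = k then Some (butlast g) else None)"

lemma nonzero_parts_snoc_eq_iff:
  "g = nonzero_parts (a @ [k]) \<longleftrightarrow> strip_last k g = Some (nonzero_parts a)"
  by (cases g rule: rev_cases) (auto simp: strip_last_def)

lemma strip_last_Suc:
  "0 < k \<Longrightarrow> strip_last (Suc k) g =
     (if g \<noteq> [] \<and> 2 \<le> last g then strip_last k (dec_last g) else None)"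
  by (auto simp: strip_last_def dec_last_def)

lemma strip_last_1: "strip_last (Suc 0) g = (if g \<noteq> [] \<and> last g = 1 then Some (butlast g) else None)"
  by (simp add: strip_last_def)

definition cop_count :: "nat list \<Rightarrow> nat list option \<Rightarrow> nat list option \<Rightarrow> nat" where
  "cop_count \<alpha> og od = (\<Sum>(a, b)\<in>weak_splits \<alpha>.
      of_bool (og = Some (nonzero_parts a) \<and> od = Some (nonzero_parts b)))"

lemma cop_count_None [simp]: "cop_count \<alpha> None od = 0" "cop_count \<alpha> og None = 0"
  by (simp_all add: cop_count_def split_def)

lemma cop_count_Some: "cop_count \<alpha> (Some g) (Some d) = cop_coeff \<alpha> g d"
proof -
  have "weak_splits \<alpha> \<inter> {p. g = nonzero_parts (fst p) \<and> d = nonzero_parts (snd p)} =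
      {(a, b). length a = length \<alpha> \<and> length b = length \<alpha> \<and> (\<forall>i<length \<alpha>. a ! i + b ! i = \<alpha> ! i) \<and>
        nonzero_parts a = g \<and> nonzero_parts b = d}"
    by (auto simp: weak_splits_def)
  then show ?thesis
    by (simp add: cop_count_def cop_coeff_def split_def finite_weak_splits)
qed

lemma cop_coeff_Nil: "cop_coeff [] g d = of_bool (g = [] \<and> d = [])"
  by (simp add: cop_count_Some[symmetric] cop_count_def weak_splits_Nil)

lemma cop_coeff_snoc:
  "cop_coeff (\<alpha> @ [m]) g d = (\<Sum>k\<le>m. cop_count \<alpha> (strip_last k g) (strip_last (m - k) d))"
proof -
  let ?f = "\<lambda>(k, a, b). (a @ [k], b @ [m - k])"
  let ?P = "\<lambda>(a, b). of_bool (Some g = Some (nonzero_parts a) \<and> Some d = Some (nonzero_parts b)) :: nat"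
  have inj: "inj_on ?f ({..m} \<times> weak_splits \<alpha>)" by (rule inj_onI) auto
  have "cop_coeff (\<alpha> @ [m]) g d = (\<Sum>p\<in>weak_splits (\<alpha> @ [m]). ?P p)"
    by (simp add: cop_count_Some[symmetric] cop_count_def)
  also have "\<dots> = (\<Sum>x\<in>{..m} \<times> weak_splits \<alpha>. ?P (?f x))"
    unfolding weak_splits_snoc by (rule sum.reindex[OF inj, unfolded comp_def])
  also have "\<dots> = (\<Sum>k\<le>m. \<Sum>p\<in>weak_splits \<alpha>. ?P (?f (k, p)))"
    by (subst sum.cartesian_product) (simp add: split_def)
  also have "\<dots> = (\<Sum>k\<le>m. cop_count \<alpha> (strip_last k g) (strip_last (m - k) d))"
    unfolding cop_count_def
    by (intro sum.cong refl)
      (simp only: split_def fst_conv snd_conv option.inject nonzero_parts_snoc_eq_iff)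
  finally show ?thesis .
qed

text \<open>Splittings of \<open>\<alpha>\<close>, sorted by whether the last part of \<open>\<alpha>\<close> contributes a nonzero
  part to the left tensor factor.\<close>

definition cop_last_left :: "nat list \<Rightarrow> nat list \<Rightarrow> nat list \<Rightarrow> nat" where
  "cop_last_left \<alpha> g d =
     (\<Sum>k\<in>{1..last \<alpha>}. cop_count (butlast \<alpha>) (strip_last k g) (strip_last (last \<alpha> - k) d))"

definition cop_last_right :: "nat list \<Rightarrow> nat list \<Rightarrow> nat list \<Rightarrow> nat" where
  "cop_last_right \<alpha> g d = cop_count (butlast \<alpha>) (Some g) (strip_last (last \<alpha>) d)"

lemma cop_coeff_split: "\<alpha> \<noteq> [] \<Longrightarrow> cop_coeff \<alpha> g d = cop_last_left \<alpha> g d + cop_last_right \<alpha> g d"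
proof -
  assume "\<alpha> \<noteq> []"
  then have "cop_coeff \<alpha> g d = cop_coeff (butlast \<alpha> @ [last \<alpha>]) g d" by simp
  also have "\<dots> = (\<Sum>k\<in>insert 0 {1..last \<alpha>}.
      cop_count (butlast \<alpha>) (strip_last k g) (strip_last (last \<alpha> - k) d))"
    unfolding cop_coeff_snoc by (rule sum.cong) auto
  also have "\<dots> = cop_last_right \<alpha> g d + cop_last_left \<alpha> g d"
    by (simp add: cop_last_left_def cop_last_right_def strip_last_def)
  finally show ?thesis by simp
qed

lemma cop_last_left_inc_last:
  assumes "0 < last \<alpha>"
  shows "cop_last_left (inc_last \<alpha>) g d =
    (if g \<noteq> [] \<and> last g = 1 then cop_last_right \<alpha> (butlast g) d else 0) +
    (if g \<noteq> [] \<and> 2 \<le> last g then cop_last_left \<alpha> (dec_last g) d else 0)"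
proof -
  let ?F = "\<lambda>k. cop_count (butlast \<alpha>) (strip_last k g) (strip_last (Suc (last \<alpha>) - k) d)"
  have "{1..Suc (last \<alpha>)} = insert 1 (Suc ` {1..last \<alpha>})"
    using assms by (auto simp: image_iff)
  then have "cop_last_left (inc_last \<alpha>) g d = ?F 1 + (\<Sum>k\<in>Suc ` {1..last \<alpha>}. ?F k)"
    by (simp add: cop_last_left_def inc_last_def)
  also have "(\<Sum>k\<in>Suc ` {1..last \<alpha>}. ?F k) = (\<Sum>k\<in>{1..last \<alpha>}. ?F (Suc k))"
    by (subst sum.reindex) auto
  also have "\<dots> = (if g \<noteq> [] \<and> 2 \<le> last g then cop_last_left \<alpha> (dec_last g) d else 0)"
    by (simp add: strip_last_Suc cop_last_left_def)
  also have "?F 1 = (if g \<noteq> [] \<and> last g = 1 then cop_last_right \<alpha> (butlast g) d else 0)"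
    by (simp add: strip_last_1 cop_last_right_def)
  finally show ?thesis by simp
qed

lemma cop_last_right_inc_last:
  "0 < last \<alpha> \<Longrightarrow> cop_last_right (inc_last \<alpha>) g d =
    (if d \<noteq> [] \<and> 2 \<le> last d then cop_last_right \<alpha> g (dec_last d) else 0)"
  by (simp add: cop_last_right_def inc_last_def strip_last_Suc)

lemma cop_last_left_snoc_1:
  "cop_last_left (\<alpha> @ [1]) g d = (if g \<noteq> [] \<and> last g = 1 then cop_coeff \<alpha> (butlast g) d else 0)"
  by (simp add: cop_last_left_def strip_last_def cop_count_Some)

lemma cop_last_right_snoc_1:
  "cop_last_right (\<alpha> @ [1]) g d = (if d \<noteq> [] \<and> last d = 1 then cop_coeff \<alpha> g (butlast d) else 0)"
  by (simp add: cop_last_right_def strip_last_1 cop_count_Some)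

section \<open>The left-hand side of the coproduct formula\<close>

definition step_left :: "'a::comm_ring_1 \<Rightarrow> 'a \<Rightarrow> (nat list \<Rightarrow> nat list \<Rightarrow> 'a) \<Rightarrow>
    (nat list \<Rightarrow> nat list \<Rightarrow> 'a) \<Rightarrow> nat list \<Rightarrow> nat list \<Rightarrow> 'a" where
  "step_left q t L R g d =
     (if g \<noteq> [] \<and> 2 \<le> last g then q * L (dec_last g) d else 0) +
     (if g \<noteq> [] \<and> last g = 1 then t * L (butlast g) d + (q + t) * R (butlast g) d else 0)"

definition step_right :: "'a::comm_ring_1 \<Rightarrow> 'a \<Rightarrow> (nat list \<Rightarrow> nat list \<Rightarrow> 'a) \<Rightarrow>
    (nat list \<Rightarrow> nat list \<Rightarrow> 'a) \<Rightarrow> nat list \<Rightarrow> nat list \<Rightarrow> 'a" where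
  "step_right q t L R g d =
     (if d \<noteq> [] \<and> 2 \<le> last d then q * R g (dec_last d) else 0) +
     (if d \<noteq> [] \<and> last d = 1 then t * L g (butlast d) + t * R g (butlast d) else 0)"

definition lhs_left :: "'a::comm_ring_1 \<Rightarrow> 'a \<Rightarrow> nat \<Rightarrow> nat list \<Rightarrow> nat list \<Rightarrow> 'a" where
  "lhs_left q t n g d = (\<Sum>a\<in>comps (Suc n). Bhat q t [Suc n] a * of_nat (cop_last_left a g d))"

definition lhs_right :: "'a::comm_ring_1 \<Rightarrow> 'a \<Rightarrow> nat \<Rightarrow> nat list \<Rightarrow> nat list \<Rightarrow> 'a" where
  "lhs_right q t n g d = (\<Sum>a\<in>comps (Suc n). Bhat q t [Suc n] a * of_nat (cop_last_right a g d))"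

lemma coprod_Bhatk_Suc:
  "coprod (Bhatk q t (Suc n)) (g, d) = lhs_left q t n g d + lhs_right q t n g d"
proof -
  have "{a. Bhatk q t (Suc n) a \<noteq> 0} \<subseteq> comps (Suc n)"
    by (auto simp: Bhatk_def Bhat_singleton comps_def split: if_splits)
  then have "coprod (Bhatk q t (Suc n)) (g, d) =
      (\<Sum>a\<in>comps (Suc n). Bhat q t [Suc n] a * of_nat (cop_coeff a g d))"
    unfolding coprod_def by (auto simp: Bhatk_def intro: sum.mono_neutral_left[OF finite_comps])
  also have "\<dots> = lhs_left q t n g d + lhs_right q t n g d"
    unfolding lhs_left_def lhs_right_def sum.distrib[symmetric]
    by (intro sum.cong refl) (simp add: cop_coeff_split comps_nonempty algebra_simps)
  finally show ?thesis .
qed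

lemma lhs_left_0: "lhs_left q t 0 g d = of_bool (g = [1] \<and> d = [])"
proof -
  have "lhs_left q t 0 g d = of_nat (cop_last_left [1] g d)"
    using comps_1 by (simp add: lhs_left_def Bhat_singleton)
  then show ?thesis
    by (cases g rule: rev_cases) (simp_all add: cop_last_left_snoc_1[of "[]", simplified] cop_coeff_Nil)
qed

lemma lhs_right_0: "lhs_right q t 0 g d = of_bool (g = [] \<and> d = [1])"
proof -
  have "lhs_right q t 0 g d = of_nat (cop_last_right [1] g d)"
    using comps_1 by (simp add: lhs_right_def Bhat_singleton)
  then show ?thesis
    by (cases d rule: rev_cases) (simp_all add: cop_last_right_snoc_1[of "[]", simplified] cop_coeff_Nil)
qed

lemma lhs_left_Suc: "lhs_left q t (Suc n) = step_left q t (lhs_left q t n) (lhs_right q t n)"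
proof (intro ext)
  fix g d :: "nat list"
  let ?B = "Bhat q t [Suc n]"
  let ?one = "g \<noteq> [] \<and> last g = 1" and ?two = "g \<noteq> [] \<and> 2 \<le> last g"
  have "lhs_left q t (Suc n) g d =
      (\<Sum>a\<in>comps (Suc n). q * ?B a *
         ((if ?one then of_nat (cop_last_right a (butlast g) d) else 0) +
          (if ?two then of_nat (cop_last_left a (dec_last g) d) else 0))) +
      (\<Sum>a\<in>comps (Suc n). t * ?B a *
         (if ?one then of_nat (cop_last_left a (butlast g) d + cop_last_right a (butlast g) d) else 0))"
    unfolding lhs_left_def sum_comps_Suc[OF zero_less_Suc]
    by (intro arg_cong2[where f = "(+)"] sum.cong refl)
      (simp_all add: Bhat_singleton_inc_last Bhat_singleton_snoc_1[simplified] cop_last_left_inc_last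
        cop_last_left_snoc_1[simplified] cop_coeff_split comps_last_pos comps_nonempty)
  then show "lhs_left q t (Suc n) g d = step_left q t (lhs_left q t n) (lhs_right q t n) g d"
    by (cases ?one; cases ?two)
      (auto simp: step_left_def lhs_left_def lhs_right_def sum_distrib_left sum.distrib algebra_simps)
qed

lemma lhs_right_Suc: "lhs_right q t (Suc n) = step_right q t (lhs_left q t n) (lhs_right q t n)"
proof (intro ext)
  fix g d :: "nat list"
  let ?B = "Bhat q t [Suc n]"
  let ?one = "d \<noteq> [] \<and> last d = 1" and ?two = "d \<noteq> [] \<and> 2 \<le> last d"
  have "lhs_right q t (Suc n) g d =
      (\<Sum>a\<in>comps (Suc n). q * ?B a *
         (if ?two then of_nat (cop_last_right a g (dec_last d)) else 0)) +
      (\<Sum>a\<in>comps (Suc n). t * ?B a *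
         (if ?one then of_nat (cop_last_left a g (butlast d) + cop_last_right a g (butlast d)) else 0))"
    unfolding lhs_right_def sum_comps_Suc[OF zero_less_Suc]
    by (intro arg_cong2[where f = "(+)"] sum.cong refl)
      (simp_all add: Bhat_singleton_inc_last Bhat_singleton_snoc_1[simplified] cop_last_right_inc_last
        cop_last_right_snoc_1[simplified] cop_coeff_split comps_last_pos comps_nonempty)
  then show "lhs_right q t (Suc n) g d = step_right q t (lhs_left q t n) (lhs_right q t n) g d"
    by (cases ?one; cases ?two)
      (auto simp: step_right_def lhs_left_def lhs_right_def sum_distrib_left sum.distrib algebra_simps)
qed

section \<open>Connected components\<close>

definition max_interval :: "nat set \<Rightarrow> nat \<Rightarrow> nat \<Rightarrow> bool" where
  "max_interval A i j \<longleftrightarrow> i \<le> j \<and> {i..j} \<subseteq> A \<and> (i = 0 \<or> i - 1 \<notin> A) \<and> Suc j \<notin> A"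

lemma consecutive_atLeastAtMost: "consecutive {i..j}"
  by (auto simp: consecutive_def)

lemma Max_atLeastAtMost [simp]: "(i::nat) \<le> j \<Longrightarrow> Max {i..j} = j"
  by (rule Max_eqI) auto

lemma Min_atLeastAtMost [simp]: "(i::nat) \<le> j \<Longrightarrow> Min {i..j} = i"
  by (rule Min_eqI) auto

lemma conn_max_interval:
  assumes "finite A" "B \<in> conn A"
  obtains i j where "B = {i..j}" "max_interval A i j"
proof -
  have ne: "B \<noteq> {}" and sub: "B \<subseteq> A" and cB: "consecutive B"
    and maximal: "\<And>C. B \<subseteq> C \<Longrightarrow> C \<subseteq> A \<Longrightarrow> consecutive C \<Longrightarrow> C = B"
    using assms(2) unfolding conn_def by blast+
  have fin: "finite B" using finite_subset[OF sub assms(1)] .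
  define i j where "i = Min B" and "j = Max B"
  have ij: "i \<in> B" "j \<in> B" using fin ne by (simp_all add: i_def j_def)
  have B_eq: "B = {i..j}"
  proof
    show "B \<subseteq> {i..j}" using Min_le[OF fin] Max_ge[OF fin] by (auto simp: i_def j_def)
    show "{i..j} \<subseteq> B"
    proof
      fix x assume "x \<in> {i..j}"
      then have "i \<le> x" "x \<le> j" by auto
      then show "x \<in> B" using cB ij unfolding consecutive_def by blast
    qed
  qed
  then have "i \<le> j" using ij by auto
  have "Suc j \<notin> A"
  proof
    assume "Suc j \<in> A"
    then have "{i..Suc j} = B"
      using B_eq sub \<open>i \<le> j\<close> by (intro maximal) (auto simp: consecutive_atLeastAtMost le_Suc_eq)
    moreover have "Suc j \<in> {i..Suc j}" using \<open>i \<le> j\<close> by simp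
    ultimately show False using B_eq by simp
  qed
  moreover have "i = 0 \<or> i - 1 \<notin> A"
  proof (rule ccontr)
    assume i: "\<not> (i = 0 \<or> i - 1 \<notin> A)"
    have "{i - 1..j} = B"
    proof (rule maximal)
      show "B \<subseteq> {i - 1..j}" using B_eq by auto
      have "{i - 1..j} \<subseteq> insert (i - 1) {i..j}" by auto
      then show "{i - 1..j} \<subseteq> A" using i B_eq sub by blast
    qed (rule consecutive_atLeastAtMost)
    then show False using B_eq i \<open>i \<le> j\<close> by auto
  qed
  ultimately show ?thesis using that B_eq sub \<open>i \<le> j\<close> by (simp add: max_interval_def)
qed

lemma max_interval_in_conn:
  assumes "max_interval A i j"
  shows "{i..j} \<in> conn A"
proof -
  have ij: "i \<le> j" "{i..j} \<subseteq> A" "i = 0 \<or> i - 1 \<notin> A" "Suc j \<notin> A"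
    using assms by (simp_all add: max_interval_def)
  have "C \<subseteq> {i..j}" if C: "{i..j} \<subseteq> C" "C \<subseteq> A" "consecutive C" for C
  proof
    fix x assume x: "x \<in> C"
    have iC: "i \<in> C" "j \<in> C" using C(1) ij(1) by auto
    show "x \<in> {i..j}"
    proof (rule ccontr)
      assume "x \<notin> {i..j}"
      then consider "x \<le> i - 1" "0 < i" | "Suc j \<le> x" by fastforce
      then show False
      proof cases
        case 1
        moreover have "i - 1 \<le> i" by simp
        ultimately have "i - 1 \<in> C" using C(3) x iC unfolding consecutive_def by blast
        then show False using C(2) ij(3) 1 by auto
      next
        case 2
        moreover have "j \<le> Suc j" by simp
        ultimately have "Suc j \<in> C" using C(3) x iC unfolding consecutive_def by blast
        then show False using C(2) ij(4) by auto
      qed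
    qed
  qed
  then show ?thesis using ij by (auto simp: conn_def consecutive_atLeastAtMost)
qed

lemma conn_eq: "finite A \<Longrightarrow> conn A = {{i..j} | i j. max_interval A i j}"
  by (blast elim: conn_max_interval intro: max_interval_in_conn)

lemma finite_conn: "finite A \<Longrightarrow> finite (conn A)"
  by (rule finite_subset[of _ "Pow A"]) (auto simp: conn_def)

lemma max_interval_unique:
  assumes "max_interval A i j" "max_interval A i' j'" "x \<in> {i..j}" "x \<in> {i'..j'}"
  shows "i = i' \<and> j = j'"
proof -
  have "j \<le> j' \<and> i' \<le> i"
    if "max_interval A i j" "max_interval A i' j'" "x \<in> {i..j}" "x \<in> {i'..j'}" for i j i' j'
  proof -
    have "Suc j' \<notin> {i..j}" "i' = 0 \<or> i' - 1 \<notin> {i..j}"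
      using that(1,2) by (auto simp: max_interval_def)
    then show ?thesis using that(3,4) by auto
  qed
  from this[OF assms] this[OF assms(2,1,4,3)] show ?thesis by simp
qed

lemma max_interval_le: "max_interval A i j \<Longrightarrow> \<forall>x\<in>A. x \<le> k \<Longrightarrow> j \<le> k"
  by (auto simp: max_interval_def)

lemma max_interval_ending_at:
  assumes "j \<in> A" "Suc j \<notin> A"
  obtains i where "max_interval A i j"
proof -
  define i where "i = (LEAST i. {i..j} \<subseteq> A)"
  have "{j..j} \<subseteq> A" using assms(1) by simp
  then have i: "{i..j} \<subseteq> A" "i \<le> j"
    unfolding i_def by (rule LeastI[of "\<lambda>i. {i..j} \<subseteq> A"], rule Least_le[of "\<lambda>i. {i..j} \<subseteq> A"])
  have "i = 0 \<or> i - 1 \<notin> A"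
  proof (rule ccontr)
    assume "\<not> (i = 0 \<or> i - 1 \<notin> A)"
    moreover have "{i - 1..j} \<subseteq> insert (i - 1) {i..j}" by auto
    ultimately have "{i - 1..j} \<subseteq> A" using i(1) by blast
    moreover have "i - 1 < i" using \<open>\<not> (i = 0 \<or> i - 1 \<notin> A)\<close> by simp
    ultimately show False using not_less_Least[of "i - 1" "\<lambda>i. {i..j} \<subseteq> A"] unfolding i_def by blast
  qed
  then show ?thesis using i assms(2) that by (simp add: max_interval_def)
qed

lemma Max_conn:
  assumes fin: "finite A"
  shows "Max ` conn A = {j \<in> A. Suc j \<notin> A}"
proof (intro set_eqI iffI)
  fix x assume "x \<in> Max ` conn A"
  then obtain B where "B \<in> conn A" "x = Max B" by blast
  then obtain i j where "x = Max {i..j}" "max_interval A i j"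
    using conn_max_interval[OF fin] by metis
  then have "x = j" "j \<in> {i..j}" "{i..j} \<subseteq> A" "Suc j \<notin> A" by (simp_all add: max_interval_def)
  then show "x \<in> {j \<in> A. Suc j \<notin> A}" by blast
next
  fix j assume "j \<in> {j \<in> A. Suc j \<notin> A}"
  then obtain i where ij: "max_interval A i j" using max_interval_ending_at by blast
  show "j \<in> Max ` conn A"
  proof (rule image_eqI)
    show "j = Max {i..j}" using ij by (simp add: max_interval_def)
    show "{i..j} \<in> conn A" using ij by (rule max_interval_in_conn)
  qed
qed

lemma max_interval_insert_Suc:
  assumes "\<forall>x\<in>A. x \<le> k"
  shows "max_interval (insert (Suc k) A) i j \<longleftrightarrow>
    j < k \<and> max_interval A i j \<or> j = Suc k \<and> (i = Suc k \<and> k \<notin> A \<or> i \<le> k \<and> max_interval A i k)"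
proof -
  have notin: "Suc k \<notin> A" "Suc (Suc k) \<notin> A" using assms by auto
  consider "j < k" | "j = k" | "j = Suc k" | "Suc k < j" by linarith
  then show ?thesis
  proof cases
    case 1
    show ?thesis
    proof (cases "i \<le> j")
      case True
      then have "Suc k \<notin> {i..j}" "Suc j \<noteq> Suc k" "i - 1 \<noteq> Suc k" using 1 by auto
      then show ?thesis using 1 by (simp add: max_interval_def subset_insert)
    qed (simp add: max_interval_def)
  next
    case 2
    then show ?thesis by (simp add: max_interval_def)
  next
    case 3
    consider "i = Suc k" | "i \<le> k" | "Suc k < i" by linarith
    then show ?thesis
    proof cases
      case 1
      then show ?thesis using \<open>j = Suc k\<close> notin by (simp add: max_interval_def)
    next
      case 2
      then have "{i..Suc k} = insert (Suc k) {i..k}" "Suc k \<notin> {i..k}" "i - 1 \<noteq> Suc k" by auto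
      then show ?thesis using 2 \<open>j = Suc k\<close> notin by (simp add: max_interval_def subset_insert)
    qed (use 3 in \<open>simp add: max_interval_def\<close>)
  next
    case 4
    have "\<not> max_interval (insert (Suc k) A) i j"
    proof
      assume "max_interval (insert (Suc k) A) i j"
      then have "j \<in> insert (Suc k) A" by (auto simp: max_interval_def)
      then show False using 4 assms by auto
    qed
    then show ?thesis using 4 by simp
  qed
qed

lemma conn_insert_Suc_notin:
  assumes "finite A" "\<forall>x\<in>A. x \<le> k" "k \<notin> A"
  shows "conn (insert (Suc k) A) = insert {Suc k..Suc k} (conn A)"
proof -
  have "j < k" if "max_interval A i j" for i j
  proof -
    have "j \<in> A" using that by (auto simp: max_interval_def)
    then show ?thesis using assms(2,3) by (auto simp: le_less)
  qed
  moreover have "\<not> max_interval A i k" for i using assms(3) by (auto simp: max_interval_def)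
  ultimately have iff: "max_interval (insert (Suc k) A) i j \<longleftrightarrow>
      max_interval A i j \<or> i = Suc k \<and> j = Suc k" for i j
    unfolding max_interval_insert_Suc[OF assms(2)] using assms(3) by auto
  have "conn (insert (Suc k) A) = {{i..j} |i j. max_interval (insert (Suc k) A) i j}"
    using assms(1) by (simp add: conn_eq)
  also have "\<dots> = insert {Suc k..Suc k} {{i..j} |i j. max_interval A i j}"
    unfolding iff by blast
  also have "\<dots> = insert {Suc k..Suc k} (conn A)"
    using assms(1) by (simp add: conn_eq)
  finally show ?thesis .
qed

lemma conn_insert_Suc_in:
  assumes "finite A" "\<forall>x\<in>A. x \<le> k" "max_interval A i0 k"
  shows "conn (insert (Suc k) A) = insert {i0..Suc k} (conn A - {{i0..k}})"
proof -
  have "k \<in> A" "i0 \<le> k" using assms(3) by (auto simp: max_interval_def)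
  have ending_at_k: "max_interval A i k \<longleftrightarrow> i = i0" for i
    using max_interval_unique[OF _ assms(3), of i k k] assms(3) by (auto simp: max_interval_def)
  have "j \<le> k" if "max_interval A i j" for i j using max_interval_le[OF that assms(2)] .
  then have iff: "max_interval (insert (Suc k) A) i j \<longleftrightarrow>
      max_interval A i j \<and> j \<noteq> k \<or> i = i0 \<and> j = Suc k" for i j
    unfolding max_interval_insert_Suc[OF assms(2)] using ending_at_k \<open>k \<in> A\<close> \<open>i0 \<le> k\<close>
    by (auto simp: le_less)
  have "{{i..j} |i j. max_interval A i j \<and> j \<noteq> k} = {{i..j} |i j. max_interval A i j} - {{i0..k}}"
  proof (intro set_eqI iffI)
    fix B assume "B \<in> {{i..j} |i j. max_interval A i j \<and> j \<noteq> k}"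
    then obtain i j where "B = {i..j}" "max_interval A i j" "j \<noteq> k" by blast
    moreover have "i \<le> j" using \<open>max_interval A i j\<close> by (simp add: max_interval_def)
    ultimately show "B \<in> {{i..j} |i j. max_interval A i j} - {{i0..k}}" by auto
  next
    fix B assume "B \<in> {{i..j} |i j. max_interval A i j} - {{i0..k}}"
    then obtain i j where "B = {i..j}" "max_interval A i j" "{i..j} \<noteq> {i0..k}" by blast
    moreover have "j \<noteq> k" using calculation ending_at_k by auto
    ultimately show "B \<in> {{i..j} |i j. max_interval A i j \<and> j \<noteq> k}" by blast
  qed
  note rest = this
  have "conn (insert (Suc k) A) = {{i..j} |i j. max_interval (insert (Suc k) A) i j}"
    using assms(1) by (simp add: conn_eq)
  also have "\<dots> = insert {i0..Suc k} {{i..j} |i j. max_interval A i j \<and> j \<noteq> k}"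
    unfolding iff by blast
  also have "\<dots> = insert {i0..Suc k} (conn A - {{i0..k}})"
    using assms(1) rest by (simp add: conn_eq)
  finally show ?thesis .
qed

definition blocks_comp :: "nat set set \<Rightarrow> nat list" where
  "blocks_comp C = map (\<lambda>m. card (THE B. B \<in> C \<and> Min B = m)) (sorted_list_of_set (Min ` C))"

lemma conn_comp_eq_blocks_comp: "conn_comp A = blocks_comp (conn A)"
  by (simp add: conn_comp_def blocks_comp_def)

lemma blocks_comp_insert_greater:
  assumes "finite C" "\<forall>B\<in>C. Min B < Min B0"
  shows "blocks_comp (insert B0 C) = blocks_comp C @ [card B0]"
proof -
  have "Min B0 \<notin> Min ` C" using assms(2) by auto
  then have sorted: "sorted_list_of_set (Min ` insert B0 C) = sorted_list_of_set (Min ` C) @ [Min B0]"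
    using assms by (simp add: sorted_list_of_set_insert sorted_insort_is_snoc less_imp_le)
  have "(THE B. B \<in> insert B0 C \<and> Min B = m) = (THE B. B \<in> C \<and> Min B = m)" if "m \<in> Min ` C" for m
  proof -
    have "B \<in> insert B0 C \<and> Min B = m \<longleftrightarrow> B \<in> C \<and> Min B = m" for B
      using that assms(2) by auto
    then show ?thesis by simp
  qed
  moreover have "(THE B. B \<in> insert B0 C \<and> Min B = Min B0) = B0"
    using assms(2) by (intro the_equality) auto
  ultimately show ?thesis
    unfolding blocks_comp_def sorted using assms(1) by simp
qed

lemma conn_comp_insert_Suc_notin:
  assumes "finite A" "\<forall>x\<in>A. x \<le> k" "k \<notin> A"
  shows "conn_comp (insert (Suc k) A) = conn_comp A @ [1]"
proof -
  have "Min B < Min {Suc k..Suc k}" if B: "B \<in> conn A" for B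
  proof -
    obtain i j where "B = {i..j}" "max_interval A i j" by (rule conn_max_interval[OF assms(1) B])
    then show ?thesis using max_interval_le[OF _ assms(2), of i j] by (simp add: max_interval_def)
  qed
  then show ?thesis
    unfolding conn_comp_eq_blocks_comp conn_insert_Suc_notin[OF assms]
    using assms(1) by (simp add: blocks_comp_insert_greater finite_conn)
qed

lemma conn_comp_insert_Suc_in:
  assumes "finite A" "\<forall>x\<in>A. x \<le> k" "k \<in> A"
  obtains c m where "0 < m" "conn_comp A = c @ [m]" "conn_comp (insert (Suc k) A) = c @ [Suc m]"
proof -
  have "Suc k \<notin> A" using assms(2) by auto
  then obtain i0 where i0: "max_interval A i0 k" by (rule max_interval_ending_at[OF assms(3)])
  then have "i0 \<le> k" by (simp add: max_interval_def)
  let ?C = "conn A - {{i0..k}}"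
  have conn: "conn A = insert {i0..k} ?C" using max_interval_in_conn[OF i0] by blast
  have "Min B < i0" if "B \<in> ?C" for B
  proof -
    have "B \<in> conn A" using that by simp
    then obtain i j where B: "B = {i..j}" "max_interval A i j" by (rule conn_max_interval[OF assms(1)])
    then have "i \<le> j" "j \<le> k" using max_interval_le[OF _ assms(2)] by (auto simp: max_interval_def)
    have "\<not> i0 \<le> i"
    proof
      assume "i0 \<le> i"
      then have "i = i0 \<and> j = k"
        using max_interval_unique[OF B(2) i0, of i] \<open>i \<le> j\<close> \<open>j \<le> k\<close> by simp
      then show False using that B(1) by simp
    qed
    then show ?thesis using B(1) \<open>i \<le> j\<close> by simp
  qed
  then have less: "\<forall>B\<in>?C. Min B < Min {i0..k}" "\<forall>B\<in>?C. Min B < Min {i0..Suc k}"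
    using \<open>i0 \<le> k\<close> by simp_all
  have fin: "finite ?C" using finite_conn[OF assms(1)] by simp
  have "conn_comp A = blocks_comp ?C @ [card {i0..k}]"
    unfolding conn_comp_eq_blocks_comp by (subst conn) (rule blocks_comp_insert_greater[OF fin less(1)])
  moreover have "conn_comp (insert (Suc k) A) = blocks_comp ?C @ [card {i0..Suc k}]"
    unfolding conn_comp_eq_blocks_comp conn_insert_Suc_in[OF assms(1,2) i0]
    by (rule blocks_comp_insert_greater[OF fin less(2)])
  ultimately show ?thesis using that[of "card {i0..k}" "blocks_comp ?C"] \<open>i0 \<le> k\<close> by simp
qed

lemma conn_comp_empty [simp]: "conn_comp {} = []"
proof -
  have "conn {} = {}" by (auto simp: conn_def)
  then show ?thesis by (simp add: conn_comp_def)
qed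

lemma is_comp_conn_comp: "A \<subseteq> {1..k} \<Longrightarrow> is_comp (conn_comp A)"
proof (induction k arbitrary: A)
  case 0
  then show ?case by simp
next
  case (Suc k)
  show ?case
  proof (cases "Suc k \<in> A")
    case False
    then show ?thesis using Suc by (intro Suc.IH) (auto simp: le_Suc_eq)
  next
    case True
    let ?A = "A - {Suc k}"
    have A: "A = insert (Suc k) ?A" "?A \<subseteq> {1..k}" "finite ?A" "\<forall>x\<in>?A. x \<le> k"
      using True Suc.prems by (auto simp: le_Suc_eq finite_subset[of _ "{1..Suc k}"])
    show ?thesis
    proof (cases "k \<in> ?A")
      case True
      then obtain c m where "0 < m" "conn_comp ?A = c @ [m]" "conn_comp (insert (Suc k) ?A) = c @ [Suc m]"
        using conn_comp_insert_Suc_in[OF A(3,4)] by blast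
      then show ?thesis using Suc.IH[OF A(2)] A(1) by simp
    next
      case False
      then show ?thesis
        using Suc.IH[OF A(2)] A(1) conn_comp_insert_Suc_notin[OF A(3,4) False] by simp
    qed
  qed
qed

lemma conn_comp_atLeastAtMost:
  "0 < a \<Longrightarrow> conn_comp {a..b} = single_comp (Suc b - a)"
proof (induction b)
  case (Suc b)
  consider "Suc b < a" | "a = Suc b" | "a \<le> b" by linarith
  then show ?case
  proof cases
    case 2
    then show ?thesis using conn_comp_insert_Suc_notin[of "{}" b] by simp
  next
    case 3
    then have "{a..Suc b} = insert (Suc b) {a..b}" by auto
    moreover obtain c m where "conn_comp {a..b} = c @ [m]" "conn_comp (insert (Suc b) {a..b}) = c @ [Suc m]"
      by (rule conn_comp_insert_Suc_in[of "{a..b}" b]) (use 3 in auto)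
    ultimately show ?thesis using Suc 3 by auto
  qed simp
qed simp

section \<open>The right-hand side of the coproduct formula\<close>

lemma c1_eq: "finite A \<Longrightarrow> c1 k A = {j \<in> A. Suc j \<notin> A} - {k}"
  by (simp add: c1_def Max_conn)

lemma c2_eq: "c2 k A = {j \<in> {1..k} - A. Suc j \<notin> {1..k} - A} - {k}"
  by (simp add: c2_def Max_conn)

definition rhs_term :: "'a::comm_ring_1 \<Rightarrow> 'a \<Rightarrow> nat \<Rightarrow> nat set \<Rightarrow> nat list \<Rightarrow> nat list \<Rightarrow> 'a" where
  "rhs_term q t k A g d = (q + t) ^ card (c2 k A) * t ^ card (c1 k A) *
     Bhat q t (alphaA A) g * Bhat q t (betaA k A) d"

lemma rhs_term_grow_alpha:
  assumes "A \<subseteq> {1..k}" "k \<in> A"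
  shows "rhs_term q t (Suc k) (insert (Suc k) A) g d =
    (if g \<noteq> [] \<and> 2 \<le> last g then q * rhs_term q t k A (dec_last g) d else 0) +
    (if g \<noteq> [] \<and> last g = 1 then t * rhs_term q t k A (butlast g) d else 0)"
proof -
  have fin: "finite A" and le: "\<forall>x\<in>A. x \<le> k" using assms(1) finite_subset by auto
  obtain c m where cm: "0 < m" "alphaA A = c @ [m]" "alphaA (insert (Suc k) A) = c @ [Suc m]"
    unfolding alphaA_def by (rule conn_comp_insert_Suc_in[OF fin le assms(2)])
  have "is_comp c" using is_comp_conn_comp[OF assms(1)] cm(2) by (simp add: alphaA_def)
  moreover have "c1 (Suc k) (insert (Suc k) A) = c1 k A" using fin le by (auto simp: c1_eq)
  moreover have "{1..Suc k} - insert (Suc k) A = {1..k} - A" by auto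
  then have "c2 (Suc k) (insert (Suc k) A) = c2 k A" "betaA (Suc k) (insert (Suc k) A) = betaA k A"
    using assms(2) by (auto simp: c2_eq betaA_def)
  ultimately show ?thesis
    using Bhat_snoc_Suc[of c m q t] cm by (simp add: rhs_term_def algebra_simps)
qed

lemma rhs_term_new_alpha:
  assumes "A \<subseteq> {1..k}" "k \<notin> A" "0 < k"
  shows "rhs_term q t (Suc k) (insert (Suc k) A) g d =
    (if g \<noteq> [] \<and> last g = 1 then (q + t) * rhs_term q t k A (butlast g) d else 0)"
proof -
  have fin: "finite A" and le: "\<forall>x\<in>A. x \<le> k" using assms(1) finite_subset by auto
  have "alphaA (insert (Suc k) A) = alphaA A @ [1]"
    unfolding alphaA_def by (rule conn_comp_insert_Suc_notin[OF fin le assms(2)])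
  moreover have "is_comp (alphaA A)" using is_comp_conn_comp[OF assms(1)] by (simp add: alphaA_def)
  moreover have "c1 (Suc k) (insert (Suc k) A) = c1 k A" using fin le assms(2) by (auto simp: c1_eq)
  moreover have "{1..Suc k} - insert (Suc k) A = {1..k} - A" by auto
  then have "c2 (Suc k) (insert (Suc k) A) = insert k (c2 k A)" "k \<notin> c2 k A"
    "betaA (Suc k) (insert (Suc k) A) = betaA k A"
    using assms by (auto simp: c2_eq betaA_def)
  moreover have "finite (c2 k A)" by (simp add: c2_eq)
  ultimately show ?thesis by (simp add: rhs_term_def Bhat_snoc_1[simplified] algebra_simps)
qed

lemma rhs_term_grow_beta:
  assumes "A \<subseteq> {1..k}" "k \<notin> A" "0 < k"
  shows "rhs_term q t (Suc k) A g d =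
    (if d \<noteq> [] \<and> 2 \<le> last d then q * rhs_term q t k A g (dec_last d) else 0) +
    (if d \<noteq> [] \<and> last d = 1 then t * rhs_term q t k A g (butlast d) else 0)"
proof -
  have fin: "finite A" using assms(1) finite_subset by auto
  have compl: "{1..Suc k} - A = insert (Suc k) ({1..k} - A)" using assms(1) by auto
  have "finite ({1..k} - A)" "\<forall>x\<in>{1..k} - A. x \<le> k" "k \<in> {1..k} - A" using assms by auto
  then obtain c m where cm: "0 < m" "betaA k A = c @ [m]" "betaA (Suc k) A = c @ [Suc m]"
    unfolding betaA_def compl by (rule conn_comp_insert_Suc_in)
  have "is_comp c" using is_comp_conn_comp[of "{1..k} - A" k] cm(2) by (simp add: betaA_def)
  moreover have "c1 (Suc k) A = c1 k A" using fin assms by (auto simp: c1_eq)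
  moreover have "c2 (Suc k) A = c2 k A" using assms unfolding c2_eq compl by auto
  ultimately show ?thesis
    using Bhat_snoc_Suc[of c m q t] cm by (simp add: rhs_term_def algebra_simps)
qed

lemma rhs_term_new_beta:
  assumes "A \<subseteq> {1..k}" "k \<in> A"
  shows "rhs_term q t (Suc k) A g d =
    (if d \<noteq> [] \<and> last d = 1 then t * rhs_term q t k A g (butlast d) else 0)"
proof -
  have fin: "finite A" using assms(1) finite_subset by auto
  have compl: "{1..Suc k} - A = insert (Suc k) ({1..k} - A)" using assms(1) by auto
  have "finite ({1..k} - A)" "\<forall>x\<in>{1..k} - A. x \<le> k" "k \<notin> {1..k} - A" using assms by auto
  then have "betaA (Suc k) A = betaA k A @ [1]"
    unfolding betaA_def compl by (rule conn_comp_insert_Suc_notin)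
  moreover have "is_comp (betaA k A)" using is_comp_conn_comp[of "{1..k} - A" k] by (simp add: betaA_def)
  moreover have "c1 (Suc k) A = insert k (c1 k A)" "k \<notin> c1 k A" using fin assms by (auto simp: c1_eq)
  moreover have "finite (c1 k A)" using fin by (simp add: c1_eq)
  moreover have "c2 (Suc k) A = c2 k A" using assms unfolding c2_eq compl by auto
  ultimately show ?thesis by (simp add: rhs_term_def Bhat_snoc_1[simplified] algebra_simps)
qed

definition rhs_left :: "'a::comm_ring_1 \<Rightarrow> 'a \<Rightarrow> nat \<Rightarrow> nat list \<Rightarrow> nat list \<Rightarrow> 'a" where
  "rhs_left q t n g d = (\<Sum>A\<in>Pow {1..n}. rhs_term q t (Suc n) (insert (Suc n) A) g d)"

definition rhs_right :: "'a::comm_ring_1 \<Rightarrow> 'a \<Rightarrow> nat \<Rightarrow> nat list \<Rightarrow> nat list \<Rightarrow> 'a" where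
  "rhs_right q t n g d = (\<Sum>A\<in>Pow {1..n}. rhs_term q t (Suc n) A g d)"

lemma sum_Pow_Suc:
  "(\<Sum>A\<in>Pow {1..Suc n}. F A) = (\<Sum>A\<in>Pow {1..n}. F (insert (Suc n) A)) + (\<Sum>A\<in>Pow {1..n}. F A)"
proof -
  have "{1..Suc n} = insert (Suc n) {1..n}" by auto
  then have "Pow {1..Suc n} = insert (Suc n) ` Pow {1..n} \<union> Pow {1..n}"
    by (simp add: Pow_insert Un_commute)
  moreover have "inj_on (insert (Suc n)) (Pow {1..n})"
    by (rule inj_onI) (metis PowD atLeastAtMost_iff insert_ident not_less_eq_eq order_refl subsetD)
  moreover have "insert (Suc n) ` Pow {1..n} \<inter> Pow {1..n} = {}" by auto
  ultimately show ?thesis by (simp add: sum.union_disjoint sum.reindex)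
qed

lemma rhs_left_0: "rhs_left q t 0 g d = of_bool (g = [1] \<and> d = [])"
proof -
  have "c1 1 {1} = {}" "c2 1 {1} = {}" by (auto simp: c1_eq c2_eq)
  moreover have "alphaA {1} = [1]" "betaA 1 {1} = []"
    using conn_comp_atLeastAtMost[of 1 1] by (simp_all add: alphaA_def betaA_def)
  ultimately show ?thesis by (simp add: rhs_left_def rhs_term_def Bhat_singleton_1[simplified] Bhat_Nil_apply)
qed

lemma rhs_right_0: "rhs_right q t 0 g d = of_bool (g = [] \<and> d = [1])"
proof -
  have "c1 1 {} = {}" "c2 1 {} = {}" by (auto simp: c1_eq c2_eq)
  moreover have "alphaA {} = []" "betaA 1 {} = [1]"
    using conn_comp_atLeastAtMost[of 1 1] by (simp_all add: alphaA_def betaA_def)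
  ultimately show ?thesis by (simp add: rhs_right_def rhs_term_def Bhat_singleton_1[simplified] Bhat_Nil_apply)
qed

lemma rhs_left_Suc: "rhs_left q t (Suc n) = step_left q t (rhs_left q t n) (rhs_right q t n)"
proof (intro ext)
  fix g d :: "nat list"
  let ?one = "g \<noteq> [] \<and> last g = 1" and ?two = "g \<noteq> [] \<and> 2 \<le> last g"
  let ?T = "rhs_term q t (Suc n)" and ?T' = "rhs_term q t (Suc (Suc n))"
  have grow: "?T' (insert (Suc (Suc n)) (insert (Suc n) A)) g d =
      (if ?two then q * ?T (insert (Suc n) A) (dec_last g) d else 0) +
      (if ?one then t * ?T (insert (Suc n) A) (butlast g) d else 0)" if "A \<subseteq> {1..n}" for A
    by (rule rhs_term_grow_alpha) (use that in auto)
  have new: "?T' (insert (Suc (Suc n)) A) g d = (if ?one then (q + t) * ?T A (butlast g) d else 0)"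
    if "A \<subseteq> {1..n}" for A
    by (rule rhs_term_new_alpha) (use that in auto)
  have "rhs_left q t (Suc n) g d =
      (\<Sum>A\<in>Pow {1..n}. (if ?two then q * ?T (insert (Suc n) A) (dec_last g) d else 0) +
         (if ?one then t * ?T (insert (Suc n) A) (butlast g) d else 0)) +
      (\<Sum>A\<in>Pow {1..n}. if ?one then (q + t) * ?T A (butlast g) d else 0)"
    unfolding rhs_left_def sum_Pow_Suc
    by (intro arg_cong2[where f = "(+)"] sum.cong refl)
      (simp_all add: grow new)
  then show "rhs_left q t (Suc n) g d = step_left q t (rhs_left q t n) (rhs_right q t n) g d"
    by (cases ?one; cases ?two)
      (auto simp: step_left_def rhs_left_def rhs_right_def sum_distrib_left sum.distrib)
qed

lemma rhs_right_Suc: "rhs_right q t (Suc n) = step_right q t (rhs_left q t n) (rhs_right q t n)"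
proof (intro ext)
  fix g d :: "nat list"
  let ?one = "d \<noteq> [] \<and> last d = 1" and ?two = "d \<noteq> [] \<and> 2 \<le> last d"
  let ?T = "rhs_term q t (Suc n)" and ?T' = "rhs_term q t (Suc (Suc n))"
  have new: "?T' (insert (Suc n) A) g d =
      (if ?one then t * ?T (insert (Suc n) A) g (butlast d) else 0)" if "A \<subseteq> {1..n}" for A
    by (rule rhs_term_new_beta) (use that in auto)
  have grow: "?T' A g d = (if ?two then q * ?T A g (dec_last d) else 0) +
      (if ?one then t * ?T A g (butlast d) else 0)" if "A \<subseteq> {1..n}" for A
    by (rule rhs_term_grow_beta) (use that in auto)
  have "rhs_right q t (Suc n) g d =
      (\<Sum>A\<in>Pow {1..n}. if ?one then t * ?T (insert (Suc n) A) g (butlast d) else 0) +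
      (\<Sum>A\<in>Pow {1..n}. (if ?two then q * ?T A g (dec_last d) else 0) +
         (if ?one then t * ?T A g (butlast d) else 0))"
    unfolding rhs_right_def sum_Pow_Suc
    by (intro arg_cong2[where f = "(+)"] sum.cong refl)
      (simp_all add: grow new)
  then show "rhs_right q t (Suc n) g d = step_right q t (rhs_left q t n) (rhs_right q t n) g d"
    by (cases ?one; cases ?two)
      (auto simp: step_right_def rhs_left_def rhs_right_def sum_distrib_left sum.distrib)
qed

lemma lhs_eq_rhs: "lhs_left q t n = rhs_left q t n \<and> lhs_right q t n = rhs_right q t n"
proof (induction n)
  case 0
  show ?case by (simp add: fun_eq_iff lhs_left_0 lhs_right_0 rhs_left_0 rhs_right_0)
next
  case (Suc n)
  then show ?case by (simp add: lhs_left_Suc lhs_right_Suc rhs_left_Suc rhs_right_Suc)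
qed

theorem coprod_Bhatk:
  "coprod (Bhatk q t k) =
     (\<lambda>(\<beta>, \<gamma>). \<Sum>A\<in>Pow {1..k}. (q + t) ^ card (c2 k A) * t ^ card (c1 k A) *
        tensor (Bhat q t (alphaA A)) (Bhat q t (betaA k A)) (\<beta>, \<gamma>))"
proof (intro ext, clarify)
  fix g d :: "nat list"
  have "coprod (Bhatk q t k) (g, d) = (\<Sum>A\<in>Pow {1..k}. rhs_term q t k A g d)"
  proof (cases k)
    case 0
    have "{a. Bhatk q t 0 a \<noteq> 0} \<subseteq> {[]}" by (auto simp: Bhatk_def Bhat_Nil_apply)
    then have "coprod (Bhatk q t 0) (g, d) = Bhatk q t 0 [] * of_nat (cop_coeff [] g d)"
      unfolding coprod_def by (subst sum.mono_neutral_left[of "{[]}"]) auto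
    moreover have "c1 0 {} = {}" "c2 0 {} = {}" "alphaA {} = []" "betaA 0 {} = []"
      by (simp_all add: c1_eq c2_eq alphaA_def betaA_def)
    ultimately show ?thesis
      using 0 by (simp add: Bhatk_def Bhat_Nil_apply cop_coeff_Nil rhs_term_def)
  next
    case (Suc n)
    then show ?thesis
      using lhs_eq_rhs[of q t n] sum_Pow_Suc[of "\<lambda>A. rhs_term q t (Suc n) A g d" n]
      by (simp add: coprod_Bhatk_Suc rhs_left_def rhs_right_def)
  qed
  then show "coprod (Bhatk q t k) (g, d) = (\<Sum>A\<in>Pow {1..k}.
      (q + t) ^ card (c2 k A) * t ^ card (c1 k A) * tensor (Bhat q t (alphaA A)) (Bhat q t (betaA k A)) (g, d))"
    by (simp add: rhs_term_def tensor_def mult.assoc)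
qed

section \<open>Specializations\<close>

lemma ends_eq_empty_iff:
  assumes "B \<subseteq> {1..k}"
  shows "{j \<in> B. Suc j \<notin> B} - {k} = {} \<longleftrightarrow> (\<exists>i\<le>k. B = {Suc i..k})"
proof
  assume closed: "{j \<in> B. Suc j \<notin> B} - {k} = {}"
  show "\<exists>i\<le>k. B = {Suc i..k}"
  proof (cases "B = {}")
    case False
    define m where "m = Min B"
    have "finite B" using assms finite_subset by blast
    then have m: "m \<in> B" "\<forall>x\<in>B. m \<le> x" using False by (simp_all add: m_def)
    have "x \<in> B" if "m \<le> x" "x \<le> k" for x
      using that(1)
    proof (induction x rule: dec_induct)
      case (step n)
      then show ?case using closed that(2) by auto
    qed (rule m(1))
    then have "B = {m..k}" using m assms by auto
    moreover have "0 < m" using m(1) assms by auto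
    ultimately show ?thesis using m(1) assms by (intro exI[of _ "m - 1"]) auto
  qed (intro exI[of _ k], simp)
next
  assume "\<exists>i\<le>k. B = {Suc i..k}"
  then show "{j \<in> B. Suc j \<notin> B} - {k} = {}" by auto
qed

lemma c1_eq_empty_iff: "A \<subseteq> {1..k} \<Longrightarrow> c1 k A = {} \<longleftrightarrow> (\<exists>i\<le>k. A = {Suc i..k})"
  using ends_eq_empty_iff[of A k] finite_subset[of A "{1..k}"] by (simp add: c1_eq)

lemma c2_eq_empty_iff:
  assumes "A \<subseteq> {1..k}"
  shows "c2 k A = {} \<longleftrightarrow> (\<exists>i\<le>k. A = {1..i})"
proof -
  have "{1..k} - A = {Suc i..k} \<longleftrightarrow> A = {1..i}" if "i \<le> k" for i
  proof
    assume "{1..k} - A = {Suc i..k}"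
    moreover have "A = {1..k} - ({1..k} - A)" by (rule double_diff[symmetric]) (use assms in auto)
    ultimately have "A = {1..k} - {Suc i..k}" by simp
    then show "A = {1..i}" using that by auto
  next
    assume "A = {1..i}"
    then show "{1..k} - A = {Suc i..k}" using that by auto
  qed
  then show ?thesis using ends_eq_empty_iff[of "{1..k} - A" k] by (auto simp: c2_eq)
qed

lemma sum_Pow_of_bool_image:
  fixes F :: "'a set \<Rightarrow> 'b::semiring_1"
  assumes "inj_on f I" "f ` I \<subseteq> Pow S" "finite S"
  shows "(\<Sum>A\<in>Pow S. of_bool (A \<in> f ` I) * F A) = (\<Sum>i\<in>I. F (f i))"
proof -
  have "Pow S \<inter> {A. A \<in> f ` I} = f ` I" using assms(2) by blast
  then show ?thesis using assms by (simp add: sum.reindex)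
qed

lemma coprod_Bhatk_collapse:
  assumes "\<And>A. A \<subseteq> {1..k} \<Longrightarrow> (q + t) ^ card (c2 k A) * t ^ card (c1 k A) = of_bool (A \<in> f ` {..k})"
    and "inj_on f {..k}" "f ` {..k} \<subseteq> Pow {1..k}"
  shows "coprod (Bhatk q t k) (g, d) = (\<Sum>i\<le>k. Bhat q t (alphaA (f i)) g * Bhat q t (betaA k (f i)) d)"
proof -
  have "coprod (Bhatk q t k) (g, d) = (\<Sum>A\<in>Pow {1..k}. (q + t) ^ card (c2 k A) * t ^ card (c1 k A) *
      tensor (Bhat q t (alphaA A)) (Bhat q t (betaA k A)) (g, d))"
    by (simp add: coprod_Bhatk)
  also have "\<dots> = (\<Sum>A\<in>Pow {1..k}.
      of_bool (A \<in> f ` {..k}) * (Bhat q t (alphaA A) g * Bhat q t (betaA k A) d))"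
  proof (intro sum.cong refl)
    fix A assume "A \<in> Pow {1..k}"
    then show "(q + t) ^ card (c2 k A) * t ^ card (c1 k A) *
        tensor (Bhat q t (alphaA A)) (Bhat q t (betaA k A)) (g, d) =
      of_bool (A \<in> f ` {..k}) * (Bhat q t (alphaA A) g * Bhat q t (betaA k A) d)"
      using assms(1)[of A] by (simp add: tensor_def mult.assoc)
  qed
  also have "\<dots> = (\<Sum>i\<le>k. Bhat q t (alphaA (f i)) g * Bhat q t (betaA k (f i)) d)"
    by (rule sum_Pow_of_bool_image[OF assms(2,3)]) simp
  finally show ?thesis .
qed

lemma Bhat_1_0:
  assumes "is_comp a"
  shows "Bhat (1::'a::comm_ring_1) 0 a = HH a"
proof
  fix g
  show "Bhat (1::'a) 0 a g = HH a g"
  proof (cases "refines g a")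
    case True
    then have "length a \<le> length g" "length g = length a \<Longrightarrow> g = a"
      using refines_length_le[OF assms] refines_length_eq[OF assms] by blast+
    then have "g \<noteq> a \<Longrightarrow> 0 < length g - length a" by fastforce
    then show ?thesis using True by (cases "g = a") (simp_all add: Bhat_def HH_def power_0_left)
  next
    case False
    then show ?thesis using refines_refl[OF assms] by (auto simp: Bhat_def HH_def)
  qed
qed

theorem coprod_Hk:
  "coprod (Hk k :: nat list \<Rightarrow> 'a::comm_ring_1) = (\<lambda>(\<beta>, \<gamma>). \<Sum>i\<le>k. tensor (Hk i) (Hk (k - i)) (\<beta>, \<gamma>))"
proof (intro ext, clarify)
  fix g d :: "nat list"
  have Hk: "Hk j = Bhat (1::'a) 0 (single_comp j)" for j by (simp add: Hk_def Bhat_1_0)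
  have "(1 + 0 :: 'a) ^ card (c2 k A) * 0 ^ card (c1 k A) = of_bool (A \<in> (\<lambda>i. {Suc i..k}) ` {..k})"
    if "A \<subseteq> {1..k}" for A
  proof -
    have "finite (c1 k A)" using finite_subset[OF that] by (simp add: c1_eq)
    then have "(1 + 0 :: 'a) ^ card (c2 k A) * 0 ^ card (c1 k A) = of_bool (c1 k A = {})"
      by (simp add: power_0_left)
    moreover have "c1 k A = {} \<longleftrightarrow> A \<in> (\<lambda>i. {Suc i..k}) ` {..k}"
      using c1_eq_empty_iff[OF that] by blast
    ultimately show ?thesis by simp
  qed
  moreover have "inj_on (\<lambda>i. {Suc i..k}) {..k}" by (rule inj_onI) (auto simp: Icc_eq_Icc)
  moreover have "(\<lambda>i. {Suc i..k}) ` {..k} \<subseteq> Pow {1..k}" by auto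
  ultimately have "coprod (Bhatk (1::'a) 0 k) (g, d) =
      (\<Sum>i\<le>k. Bhat 1 0 (alphaA {Suc i..k}) g * Bhat 1 0 (betaA k {Suc i..k}) d)"
    by (rule coprod_Bhatk_collapse)
  moreover have "Bhatk (1::'a) 0 k = Hk k" by (simp add: Hk Bhatk_def)
  ultimately have "coprod (Hk k :: nat list \<Rightarrow> 'a) (g, d) =
      (\<Sum>i\<le>k. Bhat 1 0 (alphaA {Suc i..k}) g * Bhat 1 0 (betaA k {Suc i..k}) d)"
    by simp
  also have "\<dots> = (\<Sum>i\<le>k. Hk (k - i) g * Hk i d)"
  proof (intro sum.cong refl)
    fix i assume "i \<in> {..k}"
    then have "{1..k} - {Suc i..k} = {1..i}" by auto
    then show "Bhat 1 0 (alphaA {Suc i..k}) g * Bhat 1 0 (betaA k {Suc i..k}) d = (Hk (k - i) g * Hk i d :: 'a)"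
      by (simp add: Hk alphaA_def betaA_def conn_comp_atLeastAtMost)
  qed
  also have "\<dots> = (\<Sum>i\<le>k. Hk i g * Hk (k - i) d)"
    by (subst (1 2) atMost_atLeast0) (subst sum.atLeastAtMost_rev, simp)
  finally show "coprod (Hk k :: nat list \<Rightarrow> 'a) (g, d) = (\<Sum>i\<le>k. tensor (Hk i) (Hk (k - i)) (g, d))"
    by (simp add: tensor_def)
qed

lemma Lam_eq_Bhat: "Lam a = Bhat (-1) 1 a"
  by (simp add: Lam_def Bhat_def fun_eq_iff)

theorem coprod_Lamk:
  "coprod (Lamk k :: nat list \<Rightarrow> 'a::comm_ring_1) =
     (\<lambda>(\<beta>, \<gamma>). \<Sum>i\<le>k. tensor (Lamk i) (Lamk (k - i)) (\<beta>, \<gamma>))"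
proof (intro ext, clarify)
  fix g d :: "nat list"
  have "(-1 + 1 :: 'a) ^ card (c2 k A) * 1 ^ card (c1 k A) = of_bool (A \<in> (\<lambda>i. {1..i}) ` {..k})"
    if "A \<subseteq> {1..k}" for A
  proof -
    have "finite (c2 k A)" by (simp add: c2_eq)
    then have "(-1 + 1 :: 'a) ^ card (c2 k A) * 1 ^ card (c1 k A) = of_bool (c2 k A = {})"
      by (simp add: power_0_left)
    moreover have "c2 k A = {} \<longleftrightarrow> A \<in> (\<lambda>i. {1..i}) ` {..k}"
      using c2_eq_empty_iff[OF that] by blast
    ultimately show ?thesis by simp
  qed
  moreover have "inj_on (\<lambda>i. {1..i}) {..k}" by (rule inj_onI) (auto simp: Icc_eq_Icc)
  moreover have "(\<lambda>i. {1..i}) ` {..k} \<subseteq> Pow {1..k}" by auto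
  ultimately have "coprod (Bhatk (-1::'a) 1 k) (g, d) =
      (\<Sum>i\<le>k. Bhat (-1) 1 (alphaA {1..i}) g * Bhat (-1) 1 (betaA k {1..i}) d)"
    by (rule coprod_Bhatk_collapse)
  also have "\<dots> = (\<Sum>i\<le>k. tensor (Lamk i) (Lamk (k - i)) (g, d))"
  proof (intro sum.cong refl)
    fix i assume "i \<in> {..k}"
    then have "{1..k} - {1..i} = {Suc i..k}" by auto
    then show "Bhat (-1) 1 (alphaA {1..i}) g * Bhat (-1) 1 (betaA k {1..i}) d =
        (tensor (Lamk i) (Lamk (k - i)) (g, d) :: 'a)"
      by (simp add: Lamk_def Lam_eq_Bhat tensor_def alphaA_def betaA_def conn_comp_atLeastAtMost)
  qed
  finally show "coprod (Lamk k :: nat list \<Rightarrow> 'a) (g, d) = (\<Sum>i\<le>k. tensor (Lamk i) (Lamk (k - i)) (g, d))"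
    by (simp add: Bhatk_def Lamk_def Lam_eq_Bhat)
qed

lemma qq_nonzero: "qq \<noteq> 0"
  by (simp add: qq_def Zero_fract_def eq_fract)

theorem theorem4p9:
  shows "(\<forall>\<alpha> \<beta>. is_comp \<alpha> \<longrightarrow> is_comp \<beta> \<longrightarrow>
            nsym_mult (Bhat qq tt \<alpha>) (Bhat qq tt \<beta>) = Bhat qq tt (\<alpha> @ \<beta>))
    \<and> (nsym :: (nat list \<Rightarrow> Cqt) set) \<subseteq> gen_alg (range (Bhatk qq tt))
    \<and> (\<forall>k. coprod (Bhatk qq tt k) =
            (\<lambda>(\<beta>, \<gamma>). \<Sum>A\<in>Pow {1..k}.
               (qq + tt) ^ card (c2 k A) * tt ^ card (c1 k A) *
               tensor (Bhat qq tt (alphaA A)) (Bhat qq tt (betaA k A)) (\<beta>, \<gamma>)))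
    \<and> (\<forall>k. coprod (Hk k :: nat list \<Rightarrow> complex) =
            (\<lambda>(\<beta>, \<gamma>). \<Sum>i\<le>k. tensor (Hk i) (Hk (k - i)) (\<beta>, \<gamma>)))
    \<and> (\<forall>k. coprod (Lamk k :: nat list \<Rightarrow> complex) =
            (\<lambda>(\<beta>, \<gamma>). \<Sum>i\<le>k. tensor (Lamk i) (Lamk (k - i)) (\<beta>, \<gamma>)))"
  by (simp add: Bhat_mult nsym_subset_gen_alg[OF qq_nonzero] coprod_Bhatk coprod_Hk coprod_Lamk)

end
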